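(* Every von Neumann regular commutative ring $\mathbf A$ is an amalgamation base for $\mathsf{RCR}$: for all $\mathbf B,\mathbf C\in\mathsf{RCR}$ and ring embeddings $h_1:\mathbf A\to\mathbf B$, $h_2:\mathbf A\to\mathbf C$, there exist $\mathbf D\in\mathsf{RCR}$ and ring embeddings $g_1:\mathbf B\to\mathbf D$, $g_2:\mathbf C\to\mathbf D$ with $g_1\circ h_1=g_2\circ h_2$.
   Context: Rings are unital. $\mathsf{RCR}$ is the class of reduced commutative rings (no nonzero nilpotents). A commutative ring $\mathbf A$ is (von Neumann) regular if for every $a\in A$ there is $b\in A$ with $a=a^2b$. *)

theory Defs
  imports "HOL-Algebra.Ring" "HOL-Algebra.RingHom"
begin

definition reduced_cring :: "('a, 'm) ring_scheme \<Rightarrow> bool" where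
  "reduced_cring R \<longleftrightarrow> cring R \<and>
     (\<forall>x \<in> carrier R. \<forall>n::nat. x [^]\<^bsub>R\<^esub> n = \<zero>\<^bsub>R\<^esub> \<longrightarrow> x = \<zero>\<^bsub>R\<^esub>)"

definition vn_regular_cring :: "('a, 'm) ring_scheme \<Rightarrow> bool" where
  "vn_regular_cring R \<longleftrightarrow> cring R \<and>
     (\<forall>a \<in> carrier R. \<exists>b \<in> carrier R. a = (a \<otimes>\<^bsub>R\<^esub> a) \<otimes>\<^bsub>R\<^esub> b)"

definition ring_embedding :: "('a, 'm) ring_scheme \<Rightarrow> ('b, 'n) ring_scheme \<Rightarrow> ('a \<Rightarrow> 'b) \<Rightarrow> bool" where
  "ring_embedding R S h \<longleftrightarrow> h \<in> ring_hom R S \<and> inj_on h (carrier R)"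

end

theory Submission
  imports Defs "HOL-Algebra.QuotRing" "HOL-Algebra.Weak_Morphisms"
begin

text \<open>The amalgam is the tensor product \<open>B \<otimes>\<^sub>A C\<close> modulo its nilradical. A reduced ring that
  embeds into a commutative ring stays embedded modulo the nilradical, so it suffices that
  \<open>B \<rightarrow> B \<otimes>\<^sub>A C\<close> and \<open>C \<rightarrow> B \<otimes>\<^sub>A C\<close> are injective: for every \<open>b \<noteq> 0\<close> some \<open>A\<close>-balanced biadditive
  map \<open>\<Phi>\<close> on \<open>B \<times> C\<close> has \<open>\<Phi> b 1 \<noteq> 0\<close>.

  To find \<open>\<Phi>\<close>, take by Zorn an \<open>A\<close>-submodule \<open>W\<close> of \<open>C\<close> maximal among those containing no
  \<open>h2 a\<close> with \<open>h1 a \<cdot> b = b\<close> (\<open>{0}\<close> is one since \<open>h2\<close> is injective). Every principal ideal of the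
  regular ring \<open>A\<close> is generated by an idempotent, and maximality then forces \<open>C = h2(A) + W\<close>. So
  \<open>\<Phi> y c = y \<cdot> h1 a\<close> modulo the ideal \<open>N = {y. \<exists>a. h2 a \<in> W \<and> h1 a \<cdot> y = y}\<close> of \<open>B\<close>, for any \<open>a\<close>
  with \<open>c - h2 a \<in> W\<close>, is well defined and balanced, and \<open>b \<notin> N\<close>.\<close>

text \<open>Formal sums of tensors may repeat terms, so they are sums along lists rather than
  \<open>finsum\<close> over sets.\<close>

primrec lsum :: "('g, 'm) ring_scheme \<Rightarrow> ('p \<Rightarrow> 'g) \<Rightarrow> 'p list \<Rightarrow> 'g" where
  "lsum G F [] = \<zero>\<^bsub>G\<^esub>"
| "lsum G F (p # L) = F p \<oplus>\<^bsub>G\<^esub> lsum G F L"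

context abelian_group
begin

lemma lsum_closed: "(\<And>p. p \<in> set L \<Longrightarrow> F p \<in> carrier G) \<Longrightarrow> lsum G F L \<in> carrier G"
  by (induction L) auto

lemma lsum_append:
  "(\<And>p. p \<in> set L \<Longrightarrow> F p \<in> carrier G) \<Longrightarrow> (\<And>p. p \<in> set M \<Longrightarrow> F p \<in> carrier G) \<Longrightarrow>
    lsum G F (L @ M) = lsum G F L \<oplus> lsum G F M"
  by (induction L) (auto simp: lsum_closed a_assoc)

lemma lsum_cong: "(\<And>p. p \<in> set L \<Longrightarrow> F p = F' p) \<Longrightarrow> lsum G F L = lsum G F' L"
  by (induction L) auto

lemma lsum_map: "lsum G F (map g L) = lsum G (F \<circ> g) L"
  by (induction L) auto

lemma lsum_zero: "lsum G (\<lambda>p. \<zero>) L = \<zero>"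
  by (induction L) auto

lemma lsum_add:
  "(\<And>p. p \<in> set L \<Longrightarrow> F p \<in> carrier G) \<Longrightarrow> (\<And>p. p \<in> set L \<Longrightarrow> F' p \<in> carrier G) \<Longrightarrow>
    lsum G (\<lambda>p. F p \<oplus> F' p) L = lsum G F L \<oplus> lsum G F' L"
  by (induction L) (auto simp: lsum_closed a_ac)

lemma lsum_concat:
  "(\<And>l p. l \<in> set Ls \<Longrightarrow> p \<in> set l \<Longrightarrow> F p \<in> carrier G) \<Longrightarrow>
    lsum G F (concat Ls) = lsum G (lsum G F) Ls"
proof (induction Ls)
  case (Cons a Ls)
  have "lsum G F (a @ concat Ls) = lsum G F a \<oplus> lsum G F (concat Ls)"
    using Cons.prems by (intro lsum_append) auto
  moreover have "lsum G F (concat Ls) = lsum G (lsum G F) Ls"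
    using Cons.prems by (intro Cons.IH) auto
  ultimately show ?case by simp
qed simp

lemma lsum_swap:
  "(\<And>p q. p \<in> set L \<Longrightarrow> q \<in> set M \<Longrightarrow> F p q \<in> carrier G) \<Longrightarrow>
    lsum G (\<lambda>p. lsum G (F p) M) L = lsum G (\<lambda>q. lsum G (\<lambda>p. F p q) L) M"
proof (induction L)
  case Nil
  then show ?case by (simp add: lsum_zero)
next
  case (Cons a L)
  then have "lsum G (\<lambda>q. F a q \<oplus> lsum G (\<lambda>p. F p q) L) M
      = lsum G (F a) M \<oplus> lsum G (\<lambda>q. lsum G (\<lambda>p. F p q) L) M"
    by (intro lsum_add) (auto intro!: lsum_closed)
  with Cons show ?case by simp
qed

end

section \<open>The nilradical\<close>

lemma (in ideal) FactRing_zero: "\<zero>\<^bsub>R Quot I\<^esub> = I"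
  by (simp add: FactRing_def)

lemma (in ideal) FactRing_carrier: "carrier (R Quot I) = (+>) I ` carrier R"
  by (auto simp: FactRing_def A_RCOSETS_def')

definition nilradical :: "('a, 'm) ring_scheme \<Rightarrow> 'a set" where
  "nilradical R = {x \<in> carrier R. \<exists>n::nat. x [^]\<^bsub>R\<^esub> n = \<zero>\<^bsub>R\<^esub>}"

context cring
begin

lemma nat_pow_eq_zero_mono:
  assumes "x \<in> carrier R" "x [^] (n::nat) = \<zero>" "n \<le> k"
  shows "x [^] k = \<zero>"
proof -
  have "x [^] k = x [^] n \<otimes> x [^] (k - n)"
    using assms(1,3) by (simp add: nat_pow_mult)
  also have "\<dots> = \<zero>"
    using assms by simp
  finally show ?thesis .
qed

lemma add_pow_mult_pows_eq_zero:
  assumes x: "x \<in> carrier R" and y: "y \<in> carrier R"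
    and xn: "x [^] (n::nat) = \<zero>" and ym: "y [^] (m::nat) = \<zero>"
    and le: "n + m \<le> a + b + k"
  shows "(x \<oplus> y) [^] k \<otimes> x [^] a \<otimes> y [^] (b::nat) = \<zero>"
  using le
proof (induction k arbitrary: a b)
  case 0
  then have "n \<le> a \<or> m \<le> b" by arith
  then show ?case
    using nat_pow_eq_zero_mono[OF x xn] nat_pow_eq_zero_mono[OF y ym] x y by auto
next
  case (Suc k)
  \<comment> \<open>Expanding one factor \<open>x \<oplus> y\<close> raises the exponent of \<open>x\<close> or of \<open>y\<close>.\<close>
  define P where "P = (x \<oplus> y) [^] k"
  have closed: "P \<in> carrier R" "x [^] a \<in> carrier R" "y [^] b \<in> carrier R"
    using x y by (simp_all add: P_def)
  have "(x \<oplus> y) [^] Suc k \<otimes> x [^] a \<otimes> y [^] b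
      = P \<otimes> (x [^] a \<otimes> x) \<otimes> y [^] b \<oplus> P \<otimes> x [^] a \<otimes> (y [^] b \<otimes> y)"
    unfolding nat_pow_Suc P_def[symmetric] using x y closed by algebra
  also have "\<dots> = P \<otimes> x [^] Suc a \<otimes> y [^] b \<oplus> P \<otimes> x [^] a \<otimes> y [^] Suc b"
    by simp
  also have "\<dots> = \<zero>"
    using Suc.IH[of "Suc a" b] Suc.IH[of a "Suc b"] Suc.prems by (simp add: P_def)
  finally show ?case .
qed

lemma nilpotent_add:
  assumes "x \<in> carrier R" "y \<in> carrier R" "x [^] (n::nat) = \<zero>" "y [^] (m::nat) = \<zero>"
  shows "(x \<oplus> y) [^] (n + m) = \<zero>"
  using add_pow_mult_pows_eq_zero[OF assms, of 0 0 "n + m"] assms(1,2) by simp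

lemma nilradical_ideal: "ideal (nilradical R) R"
proof (rule idealI)
  show "subgroup (nilradical R) (add_monoid R)"
  proof (rule add.subgroupI)
    have "\<zero> [^] (1::nat) = \<zero>" by simp
    then have "\<zero> \<in> nilradical R" unfolding nilradical_def by blast
    then show "nilradical R \<noteq> {}" by blast
  next
    fix x assume "x \<in> nilradical R"
    then obtain n :: nat where x: "x \<in> carrier R" "x [^] n = \<zero>" by (auto simp: nilradical_def)
    then have "(\<ominus> \<one> \<otimes> x) [^] n = \<zero>" by (simp add: nat_pow_distrib)
    with x show "\<ominus> x \<in> nilradical R" by (auto simp: nilradical_def l_minus)
  next
    fix x y assume "x \<in> nilradical R" "y \<in> nilradical R"
    then obtain n m :: nat where "x \<in> carrier R" "x [^] n = \<zero>" "y \<in> carrier R" "y [^] m = \<zero>"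
      by (auto simp: nilradical_def)
    then show "x \<oplus> y \<in> nilradical R"
      using nilpotent_add unfolding nilradical_def by blast
  qed (auto simp: nilradical_def)
next
  fix r x assume r: "r \<in> carrier R" and "x \<in> nilradical R"
  then obtain n :: nat where x: "x \<in> carrier R" "x [^] n = \<zero>"
    by (auto simp: nilradical_def)
  then have "(r \<otimes> x) [^] n = \<zero>"
    using r by (simp add: nat_pow_distrib)
  then show "r \<otimes> x \<in> nilradical R" and "x \<otimes> r \<in> nilradical R"
    using r x by (auto simp: nilradical_def m_comm)
qed (rule ring_axioms)

lemma reduced_quotient_nilradical: "reduced_cring (R Quot nilradical R)"
  unfolding reduced_cring_def
proof (intro conjI ballI allI impI)
  interpret I: ideal "nilradical R" R by (rule nilradical_ideal)
  interpret h: ring_hom_ring R "R Quot nilradical R" "(+>) (nilradical R)"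
    by (rule I.rcos_ring_hom_ring)
  show "cring (R Quot nilradical R)" by (rule I.quotient_is_cring[OF is_cring])
  fix X and n :: nat
  assume X: "X \<in> carrier (R Quot nilradical R)"
    and Xn: "X [^]\<^bsub>R Quot nilradical R\<^esub> n = \<zero>\<^bsub>R Quot nilradical R\<^esub>"
  obtain x where x: "x \<in> carrier R" "X = nilradical R +> x"
    using X by (auto simp: I.FactRing_carrier)
  have "nilradical R +> (x [^] n) = X [^]\<^bsub>R Quot nilradical R\<^esub> n"
    using h.hom_nat_pow[OF x(1)] x(2) by simp
  then have "nilradical R +> (x [^] n) = nilradical R"
    using Xn I.FactRing_zero by simp
  then have "x [^] n \<in> nilradical R"
    using I.a_rcos_self[of "x [^] n"] x(1) by simp
  then obtain k :: nat where "(x [^] n) [^] k = \<zero>"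
    unfolding nilradical_def by blast
  then have "x [^] (n * k) = \<zero>"
    by (simp add: nat_pow_pow[OF x(1)])
  with x have "x \<in> nilradical R"
    unfolding nilradical_def by blast
  with x show "X = \<zero>\<^bsub>R Quot nilradical R\<^esub>"
    by (simp add: I.a_rcos_const I.FactRing_zero)
qed

end

lemma ring_embedding_comp:
  "ring_embedding R S f \<Longrightarrow> ring_embedding S T g \<Longrightarrow> ring_embedding R T (g \<circ> f)"
  unfolding ring_embedding_def
  by (metis comp_inj_on image_subsetI inj_on_subset ring_hom_closed ring_hom_trans)

lemma ring_embedding_image_ring:
  "inj_on f (carrier R) \<Longrightarrow> ring_embedding R (image_ring f R) f"
  using inj_imp_image_ring_iso unfolding ring_embedding_def ring_iso_def by blast

lemma reduced_cring_image_ring: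
  assumes R: "reduced_cring R" and f: "inj_on f (carrier R)"
  shows "reduced_cring (image_ring f R)"
  unfolding reduced_cring_def
proof (intro conjI ballI allI impI)
  interpret R: cring R using R by (simp add: reduced_cring_def)
  have iso: "f \<in> ring_iso R (image_ring f R)" by (rule inj_imp_image_ring_iso[OF f])
  have zero: "\<zero>\<^bsub>image_ring f R\<^esub> = f \<zero>\<^bsub>R\<^esub>" by (rule image_ring_zero)
  have "cring ((image_ring f R) \<lparr>zero := f \<zero>\<^bsub>R\<^esub>\<rparr>)" by (rule R.ring_iso_imp_img_cring[OF iso])
  moreover have "(image_ring f R) \<lparr>zero := f \<zero>\<^bsub>R\<^esub>\<rparr> = image_ring f R"
    by (simp add: zero[symmetric])
  ultimately show cring: "cring (image_ring f R)" by simp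
  have "f \<in> ring_hom R (image_ring f R)" using iso unfolding ring_iso_def by blast
  then interpret h: ring_hom_ring R "image_ring f R" f
    using cring by (intro ring_hom_ringI2 R.ring_axioms cring.axioms(1))
  fix d and n :: nat
  assume d: "d \<in> carrier (image_ring f R)"
    and dn: "d [^]\<^bsub>image_ring f R\<^esub> n = \<zero>\<^bsub>image_ring f R\<^esub>"
  obtain x where x: "x \<in> carrier R" "d = f x" using d by (auto simp: image_ring_carrier)
  have "f (x [^]\<^bsub>R\<^esub> n) = f \<zero>\<^bsub>R\<^esub>"
    using h.hom_nat_pow[OF x(1), of n] dn by (simp only: x(2) zero)
  then have "x [^]\<^bsub>R\<^esub> n = \<zero>\<^bsub>R\<^esub>" using inj_onD[OF f] x(1) by simp
  then have "x = \<zero>\<^bsub>R\<^esub>" using R x(1) unfolding reduced_cring_def by blast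
  then show "d = \<zero>\<^bsub>image_ring f R\<^esub>" by (simp only: x(2) zero)
qed

lemma ring_embedding_quotient_nilradical:
  assumes R: "reduced_cring R" and S: "cring S" and j: "ring_embedding R S j"
  shows "ring_embedding R (S Quot nilradical S) ((+>\<^bsub>S\<^esub>) (nilradical S) \<circ> j)"
proof -
  interpret R: cring R using R by (simp add: reduced_cring_def)
  interpret S: cring S by (rule S)
  interpret I: ideal "nilradical S" S by (rule S.nilradical_ideal)
  have hom: "j \<in> ring_hom R S" and inj: "inj_on j (carrier R)"
    using j by (auto simp: ring_embedding_def)
  interpret j: ring_hom_ring R S j by (rule ring_hom_ringI2[OF R.ring_axioms S.ring_axioms hom])
  have "x = y" if x: "x \<in> carrier R" and y: "y \<in> carrier R"
    and e: "nilradical S +>\<^bsub>S\<^esub> j x = nilradical S +>\<^bsub>S\<^esub> j y" for x y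
  proof -
    have xy: "x \<ominus>\<^bsub>R\<^esub> y \<in> carrier R" using x y by simp
    have "j (x \<ominus>\<^bsub>R\<^esub> y) = j x \<ominus>\<^bsub>S\<^esub> j y"
      using x y by (simp add: R.minus_eq S.minus_eq)
    also have "\<dots> \<in> nilradical S"
      using S.quotient_eq_iff_same_a_r_cos[OF I.ideal_axioms] e x y by simp
    finally obtain n :: nat where "j (x \<ominus>\<^bsub>R\<^esub> y) [^]\<^bsub>S\<^esub> n = \<zero>\<^bsub>S\<^esub>"
      unfolding nilradical_def by blast
    then have "j ((x \<ominus>\<^bsub>R\<^esub> y) [^]\<^bsub>R\<^esub> n) = j \<zero>\<^bsub>R\<^esub>"
      using j.hom_nat_pow[OF xy] by simp
    then have "(x \<ominus>\<^bsub>R\<^esub> y) [^]\<^bsub>R\<^esub> n = \<zero>\<^bsub>R\<^esub>"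
      using inj_onD[OF inj] xy by simp
    then have "x \<ominus>\<^bsub>R\<^esub> y = \<zero>\<^bsub>R\<^esub>"
      using R xy unfolding reduced_cring_def by blast
    moreover have "x = (x \<ominus>\<^bsub>R\<^esub> y) \<oplus>\<^bsub>R\<^esub> y" using x y by algebra
    ultimately show "x = y" using y by simp
  qed
  then have "inj_on ((+>\<^bsub>S\<^esub>) (nilradical S) \<circ> j) (carrier R)"
    by (intro inj_onI) simp
  moreover have "(+>\<^bsub>S\<^esub>) (nilradical S) \<circ> j \<in> ring_hom R (S Quot nilradical S)"
    by (rule ring_hom_trans[OF hom I.rcos_ring_hom])
  ultimately show ?thesis by (simp add: ring_embedding_def)
qed

section \<open>Balanced maps\<close>

definition balanced_map :: "('a, 'm1) ring_scheme \<Rightarrow> ('b, 'm2) ring_scheme \<Rightarrow> ('c, 'm3) ring_scheme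
    \<Rightarrow> ('a \<Rightarrow> 'b) \<Rightarrow> ('a \<Rightarrow> 'c) \<Rightarrow> 'g ring \<Rightarrow> ('b \<Rightarrow> 'c \<Rightarrow> 'g) \<Rightarrow> bool" where
  "balanced_map A B C h1 h2 G \<Phi> \<longleftrightarrow> abelian_group G \<and>
     (\<forall>x\<in>carrier B. \<forall>y\<in>carrier C. \<Phi> x y \<in> carrier G) \<and>
     (\<forall>x1\<in>carrier B. \<forall>x2\<in>carrier B. \<forall>y\<in>carrier C. \<Phi> (x1 \<oplus>\<^bsub>B\<^esub> x2) y = \<Phi> x1 y \<oplus>\<^bsub>G\<^esub> \<Phi> x2 y) \<and>
     (\<forall>x\<in>carrier B. \<forall>y1\<in>carrier C. \<forall>y2\<in>carrier C. \<Phi> x (y1 \<oplus>\<^bsub>C\<^esub> y2) = \<Phi> x y1 \<oplus>\<^bsub>G\<^esub> \<Phi> x y2) \<and>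
     (\<forall>a\<in>carrier A. \<forall>x\<in>carrier B. \<forall>y\<in>carrier C. \<Phi> (h1 a \<otimes>\<^bsub>B\<^esub> x) y = \<Phi> x (h2 a \<otimes>\<^bsub>C\<^esub> y))"

lemma balanced_mapD:
  assumes "balanced_map A B C h1 h2 G \<Phi>"
  shows balanced_map_abelian_group: "abelian_group G"
    and balanced_map_closed: "\<And>x y. x \<in> carrier B \<Longrightarrow> y \<in> carrier C \<Longrightarrow> \<Phi> x y \<in> carrier G"
    and balanced_map_add_left: "\<And>x1 x2 y. x1 \<in> carrier B \<Longrightarrow> x2 \<in> carrier B \<Longrightarrow> y \<in> carrier C \<Longrightarrow>
      \<Phi> (x1 \<oplus>\<^bsub>B\<^esub> x2) y = \<Phi> x1 y \<oplus>\<^bsub>G\<^esub> \<Phi> x2 y"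
    and balanced_map_add_right: "\<And>x y1 y2. x \<in> carrier B \<Longrightarrow> y1 \<in> carrier C \<Longrightarrow> y2 \<in> carrier C \<Longrightarrow>
      \<Phi> x (y1 \<oplus>\<^bsub>C\<^esub> y2) = \<Phi> x y1 \<oplus>\<^bsub>G\<^esub> \<Phi> x y2"
    and balanced_map_scalar: "\<And>a x y. a \<in> carrier A \<Longrightarrow> x \<in> carrier B \<Longrightarrow> y \<in> carrier C \<Longrightarrow>
      \<Phi> (h1 a \<otimes>\<^bsub>B\<^esub> x) y = \<Phi> x (h2 a \<otimes>\<^bsub>C\<^esub> y)"
  using assms unfolding balanced_map_def by blast+

lemma balanced_map_swap:
  "balanced_map A C B h2 h1 G \<Phi> \<Longrightarrow> balanced_map A B C h1 h2 G (\<lambda>x y. \<Phi> y x)"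
  unfolding balanced_map_def by auto

lemma balanced_map_zero_left:
  assumes \<Phi>: "balanced_map A B C h1 h2 G \<Phi>" and B: "ring B" and y: "y \<in> carrier C"
  shows "\<Phi> \<zero>\<^bsub>B\<^esub> y = \<zero>\<^bsub>G\<^esub>"
proof -
  interpret G: abelian_group G by (rule balanced_map_abelian_group[OF \<Phi>])
  have closed: "\<Phi> \<zero>\<^bsub>B\<^esub> y \<in> carrier G" using balanced_map_closed[OF \<Phi>] B y by (simp add: ring.ring_simprules)
  have "\<Phi> \<zero>\<^bsub>B\<^esub> y \<oplus>\<^bsub>G\<^esub> \<Phi> \<zero>\<^bsub>B\<^esub> y = \<Phi> \<zero>\<^bsub>B\<^esub> y"
    using balanced_map_add_left[OF \<Phi>, of "\<zero>\<^bsub>B\<^esub>" "\<zero>\<^bsub>B\<^esub>" y] B y by (simp add: ring.ring_simprules)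
  then show ?thesis using G.add.l_cancel_one[OF closed closed] by simp
qed

lemma balanced_map_image_ring:
  assumes \<Phi>: "balanced_map A B C h1 h2 G \<Phi>" and G: "ring G" and f: "inj_on f (carrier G)"
  shows "balanced_map A B C h1 h2 (image_ring f G) (\<lambda>x y. f (\<Phi> x y))"
proof -
  have hom: "f \<in> ring_hom G (image_ring f G)"
    using inj_imp_image_ring_iso[OF f] unfolding ring_iso_def by blast
  have "abelian_group (image_ring f G)"
    using ring.inj_imp_image_ring_is_ring[OF G f] by (rule ring.is_abelian_group)
  then show ?thesis
    unfolding balanced_map_def
    using balanced_mapD[OF \<Phi>] ring_hom_closed[OF hom] ring_hom_add[OF hom] by simp
qed

lemma balanced_map_zero:
  assumes "abelian_group G"
  shows "balanced_map A B C h1 h2 G (\<lambda>x y. \<zero>\<^bsub>G\<^esub>)"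
proof -
  interpret G: abelian_group G by fact
  show ?thesis by (simp add: balanced_map_def G.abelian_group_axioms)
qed

lemma balanced_map_add:
  assumes \<Phi>: "balanced_map A B C h1 h2 G \<Phi>" and \<Psi>: "balanced_map A B C h1 h2 G \<Psi>"
  shows "balanced_map A B C h1 h2 G (\<lambda>x y. \<Phi> x y \<oplus>\<^bsub>G\<^esub> \<Psi> x y)"
proof -
  interpret G: abelian_group G by (rule balanced_map_abelian_group[OF \<Phi>])
  note closed = balanced_map_closed[OF \<Phi>] balanced_map_closed[OF \<Psi>]
  show ?thesis unfolding balanced_map_def
  proof (intro conjI ballI)
    fix x1 x2 y assume "x1 \<in> carrier B" "x2 \<in> carrier B" "y \<in> carrier C"
    then show "\<Phi> (x1 \<oplus>\<^bsub>B\<^esub> x2) y \<oplus>\<^bsub>G\<^esub> \<Psi> (x1 \<oplus>\<^bsub>B\<^esub> x2) y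
        = (\<Phi> x1 y \<oplus>\<^bsub>G\<^esub> \<Psi> x1 y) \<oplus>\<^bsub>G\<^esub> (\<Phi> x2 y \<oplus>\<^bsub>G\<^esub> \<Psi> x2 y)"
      using closed by (simp add: balanced_map_add_left[OF \<Phi>] balanced_map_add_left[OF \<Psi>] G.a_ac)
  next
    fix x y1 y2 assume "x \<in> carrier B" "y1 \<in> carrier C" "y2 \<in> carrier C"
    then show "\<Phi> x (y1 \<oplus>\<^bsub>C\<^esub> y2) \<oplus>\<^bsub>G\<^esub> \<Psi> x (y1 \<oplus>\<^bsub>C\<^esub> y2)
        = (\<Phi> x y1 \<oplus>\<^bsub>G\<^esub> \<Psi> x y1) \<oplus>\<^bsub>G\<^esub> (\<Phi> x y2 \<oplus>\<^bsub>G\<^esub> \<Psi> x y2)"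
      using closed by (simp add: balanced_map_add_right[OF \<Phi>] balanced_map_add_right[OF \<Psi>] G.a_ac)
  qed (use closed balanced_map_scalar[OF \<Phi>] balanced_map_scalar[OF \<Psi>] G.abelian_group_axioms
      in simp_all)
qed

lemma balanced_map_lsum:
  assumes "abelian_group G" and "\<And>p. p \<in> set M \<Longrightarrow> balanced_map A B C h1 h2 G (\<Psi> p)"
  shows "balanced_map A B C h1 h2 G (\<lambda>x y. lsum G (\<lambda>p. \<Psi> p x y) M)"
  using assms(2) by (induction M) (simp_all add: balanced_map_zero[OF assms(1)] balanced_map_add)

section \<open>Separating balanced maps over a regular base\<close>

lemma (in cring) regular_idempotent:
  assumes a: "a \<in> carrier R" and x: "x \<in> carrier R" and ax: "a = a \<otimes> a \<otimes> x"
  shows "(a \<otimes> x) \<otimes> (a \<otimes> x) = a \<otimes> x" and "a \<otimes> (a \<otimes> x) = a"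
proof -
  show aax: "a \<otimes> (a \<otimes> x) = a" using a x ax by (simp add: m_assoc)
  have "(a \<otimes> x) \<otimes> (a \<otimes> x) = (a \<otimes> (a \<otimes> x)) \<otimes> x" using a x by algebra
  then show "(a \<otimes> x) \<otimes> (a \<otimes> x) = a \<otimes> x" by (simp only: aax)
qed

lemma (in cring) idempotent_combination:
  assumes E: "E \<in> carrier R" "E \<otimes> E = E"
    and closed: "w \<in> carrier R" "w' \<in> carrier R" "c \<in> carrier R" "c' \<in> carrier R"
  shows "(\<one> \<ominus> E) \<otimes> (w \<oplus> E \<otimes> c) \<oplus> E \<otimes> (w' \<oplus> (\<one> \<ominus> E) \<otimes> c') = (\<one> \<ominus> E) \<otimes> w \<oplus> E \<otimes> w'"
proof -
  have "(\<one> \<ominus> E) \<otimes> (w \<oplus> E \<otimes> c) \<oplus> E \<otimes> (w' \<oplus> (\<one> \<ominus> E) \<otimes> c')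
      = (\<one> \<ominus> E) \<otimes> w \<oplus> E \<otimes> w' \<oplus> (E \<ominus> E \<otimes> E) \<otimes> (c \<oplus> c')"
    using E(1) closed by algebra
  also have "\<dots> = (\<one> \<ominus> E) \<otimes> w \<oplus> E \<otimes> w'"
    unfolding E(2) using E(1) closed by algebra
  finally show ?thesis .
qed

lemma (in cring) combination_fixes:
  assumes "F \<in> carrier R" "u \<in> carrier R" "u' \<in> carrier R" "b \<in> carrier R"
    and "u \<otimes> b = b" "u' \<otimes> b = b"
  shows "((\<one> \<ominus> F) \<otimes> u \<oplus> F \<otimes> u') \<otimes> b = b"
proof -
  have "((\<one> \<ominus> F) \<otimes> u \<oplus> F \<otimes> u') \<otimes> b = (\<one> \<ominus> F) \<otimes> (u \<otimes> b) \<oplus> F \<otimes> (u' \<otimes> b)"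
    using assms(1-4) by algebra
  also have "\<dots> = b" unfolding assms(5,6) using assms(1,4) by algebra
  finally show ?thesis .
qed

locale algebra_pair =
  fixes A :: "'a ring" and B :: "'b ring" and C :: "'c ring" and h1 h2
  assumes cA: "cring A" and cB: "cring B" and cC: "cring C"
    and h1: "h1 \<in> ring_hom A B" and h2: "h2 \<in> ring_hom A C"

sublocale algebra_pair \<subseteq> RA: cring A by (rule cA)
sublocale algebra_pair \<subseteq> RB: cring B by (rule cB)
sublocale algebra_pair \<subseteq> RC: cring C by (rule cC)
sublocale algebra_pair \<subseteq> H1: ring_hom_cring A B h1
  by (simp add: ring_hom_cring_def ring_hom_cring_axioms_def cA cB h1)
sublocale algebra_pair \<subseteq> H2: ring_hom_cring A C h2
  by (simp add: ring_hom_cring_def ring_hom_cring_axioms_def cA cC h2)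

context algebra_pair
begin

abbreviation balanced :: "'g ring \<Rightarrow> ('b \<Rightarrow> 'c \<Rightarrow> 'g) \<Rightarrow> bool" where
  "balanced \<equiv> balanced_map A B C h1 h2"

lemma h1_minus: "x \<in> carrier A \<Longrightarrow> y \<in> carrier A \<Longrightarrow> h1 (x \<ominus>\<^bsub>A\<^esub> y) = h1 x \<ominus>\<^bsub>B\<^esub> h1 y"
  by (simp add: RA.minus_eq RB.minus_eq)

lemma h2_minus: "x \<in> carrier A \<Longrightarrow> y \<in> carrier A \<Longrightarrow> h2 (x \<ominus>\<^bsub>A\<^esub> y) = h2 x \<ominus>\<^bsub>C\<^esub> h2 y"
  by (simp add: RA.minus_eq RC.minus_eq)

end

locale regular_separation = algebra_pair +
  fixes b
  assumes regular: "\<And>a. a \<in> carrier A \<Longrightarrow> \<exists>x\<in>carrier A. a = a \<otimes>\<^bsub>A\<^esub> a \<otimes>\<^bsub>A\<^esub> x"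
    and inj_h2: "inj_on h2 (carrier A)"
    and b: "b \<in> carrier B" and b_nonzero: "b \<noteq> \<zero>\<^bsub>B\<^esub>"
begin

text \<open>\<open>C\<close> is an \<open>A\<close>-module through \<open>h2\<close>.\<close>

definition A_submodule :: "'c set \<Rightarrow> bool" where
  "A_submodule W \<longleftrightarrow> W \<subseteq> carrier C \<and> \<zero>\<^bsub>C\<^esub> \<in> W \<and> (\<forall>x\<in>W. \<forall>y\<in>W. x \<oplus>\<^bsub>C\<^esub> y \<in> W)
     \<and> (\<forall>a\<in>carrier A. \<forall>x\<in>W. h2 a \<otimes>\<^bsub>C\<^esub> x \<in> W)"

definition avoiding :: "'c set \<Rightarrow> bool" where
  "avoiding W \<longleftrightarrow> (\<forall>a\<in>carrier A. h2 a \<in> W \<longrightarrow> h1 a \<otimes>\<^bsub>B\<^esub> b \<noteq> b)"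

lemma A_submodule_carrier: "A_submodule W \<Longrightarrow> x \<in> W \<Longrightarrow> x \<in> carrier C"
  by (auto simp: A_submodule_def)

lemma A_submodule_zero: "A_submodule W \<Longrightarrow> \<zero>\<^bsub>C\<^esub> \<in> W"
  by (simp add: A_submodule_def)

lemma A_submodule_add: "A_submodule W \<Longrightarrow> x \<in> W \<Longrightarrow> y \<in> W \<Longrightarrow> x \<oplus>\<^bsub>C\<^esub> y \<in> W"
  by (simp add: A_submodule_def)

lemma A_submodule_smult: "A_submodule W \<Longrightarrow> a \<in> carrier A \<Longrightarrow> x \<in> W \<Longrightarrow> h2 a \<otimes>\<^bsub>C\<^esub> x \<in> W"
  by (simp add: A_submodule_def)

lemma A_submodule_minus:
  assumes W: "A_submodule W" and x: "x \<in> W" and y: "y \<in> W"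
  shows "x \<ominus>\<^bsub>C\<^esub> y \<in> W"
proof -
  have "h2 (\<ominus>\<^bsub>A\<^esub> \<one>\<^bsub>A\<^esub>) \<otimes>\<^bsub>C\<^esub> y = \<ominus>\<^bsub>C\<^esub> y"
    using A_submodule_carrier[OF W y] by (simp add: RC.l_minus)
  then have "\<ominus>\<^bsub>C\<^esub> y \<in> W" using A_submodule_smult[OF W _ y] by force
  then show ?thesis using A_submodule_add[OF W x] by (simp add: RC.minus_eq)
qed

lemma A_submodule_sum:
  assumes V: "A_submodule V" and S: "A_submodule S"
  shows "A_submodule {v \<oplus>\<^bsub>C\<^esub> s | v s. v \<in> V \<and> s \<in> S}"
  unfolding A_submodule_def
proof (intro conjI ballI)
  show "{v \<oplus>\<^bsub>C\<^esub> s | v s. v \<in> V \<and> s \<in> S} \<subseteq> carrier C"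
    using A_submodule_carrier[OF V] A_submodule_carrier[OF S] by auto
  have "\<zero>\<^bsub>C\<^esub> = \<zero>\<^bsub>C\<^esub> \<oplus>\<^bsub>C\<^esub> \<zero>\<^bsub>C\<^esub>" by simp
  then show "\<zero>\<^bsub>C\<^esub> \<in> {v \<oplus>\<^bsub>C\<^esub> s | v s. v \<in> V \<and> s \<in> S}"
    using A_submodule_zero[OF V] A_submodule_zero[OF S] by blast
next
  fix x y assume "x \<in> {v \<oplus>\<^bsub>C\<^esub> s | v s. v \<in> V \<and> s \<in> S}" "y \<in> {v \<oplus>\<^bsub>C\<^esub> s | v s. v \<in> V \<and> s \<in> S}"
  then obtain v s v' s' where x: "x = v \<oplus>\<^bsub>C\<^esub> s" "v \<in> V" "s \<in> S"
    and y: "y = v' \<oplus>\<^bsub>C\<^esub> s'" "v' \<in> V" "s' \<in> S" by blast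
  have "x \<oplus>\<^bsub>C\<^esub> y = (v \<oplus>\<^bsub>C\<^esub> v') \<oplus>\<^bsub>C\<^esub> (s \<oplus>\<^bsub>C\<^esub> s')"
    using x y A_submodule_carrier[OF V] A_submodule_carrier[OF S] by (simp add: RC.a_ac)
  then show "x \<oplus>\<^bsub>C\<^esub> y \<in> {v \<oplus>\<^bsub>C\<^esub> s | v s. v \<in> V \<and> s \<in> S}"
    using A_submodule_add[OF V x(2) y(2)] A_submodule_add[OF S x(3) y(3)] by blast
next
  fix a x assume a: "a \<in> carrier A" and "x \<in> {v \<oplus>\<^bsub>C\<^esub> s | v s. v \<in> V \<and> s \<in> S}"
  then obtain v s where x: "x = v \<oplus>\<^bsub>C\<^esub> s" "v \<in> V" "s \<in> S" by blast
  have "h2 a \<otimes>\<^bsub>C\<^esub> x = h2 a \<otimes>\<^bsub>C\<^esub> v \<oplus>\<^bsub>C\<^esub> h2 a \<otimes>\<^bsub>C\<^esub> s"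
    using a x A_submodule_carrier[OF V] A_submodule_carrier[OF S] by (simp add: RC.r_distr)
  then show "h2 a \<otimes>\<^bsub>C\<^esub> x \<in> {v \<oplus>\<^bsub>C\<^esub> s | v s. v \<in> V \<and> s \<in> S}"
    using A_submodule_smult[OF V a x(2)] A_submodule_smult[OF S a x(3)] by blast
qed

lemma A_submodule_principal:
  assumes x: "x \<in> carrier C"
  shows "A_submodule {x \<otimes>\<^bsub>C\<^esub> c | c. c \<in> carrier C}"
  unfolding A_submodule_def
proof (intro conjI ballI)
  have "\<zero>\<^bsub>C\<^esub> = x \<otimes>\<^bsub>C\<^esub> \<zero>\<^bsub>C\<^esub>" using x by simp
  then show "\<zero>\<^bsub>C\<^esub> \<in> {x \<otimes>\<^bsub>C\<^esub> c | c. c \<in> carrier C}" by blast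
next
  fix y z assume "y \<in> {x \<otimes>\<^bsub>C\<^esub> c | c. c \<in> carrier C}" "z \<in> {x \<otimes>\<^bsub>C\<^esub> c | c. c \<in> carrier C}"
  then obtain c c' where "y = x \<otimes>\<^bsub>C\<^esub> c" "z = x \<otimes>\<^bsub>C\<^esub> c'" "c \<in> carrier C" "c' \<in> carrier C" by blast
  then have "y \<oplus>\<^bsub>C\<^esub> z = x \<otimes>\<^bsub>C\<^esub> (c \<oplus>\<^bsub>C\<^esub> c')" "c \<oplus>\<^bsub>C\<^esub> c' \<in> carrier C"
    using x by (simp_all add: RC.r_distr)
  then show "y \<oplus>\<^bsub>C\<^esub> z \<in> {x \<otimes>\<^bsub>C\<^esub> c | c. c \<in> carrier C}" by blast
next
  fix a y assume a: "a \<in> carrier A" and "y \<in> {x \<otimes>\<^bsub>C\<^esub> c | c. c \<in> carrier C}"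
  then obtain c where "y = x \<otimes>\<^bsub>C\<^esub> c" "c \<in> carrier C" by blast
  then have "h2 a \<otimes>\<^bsub>C\<^esub> y = x \<otimes>\<^bsub>C\<^esub> (h2 a \<otimes>\<^bsub>C\<^esub> c)" "h2 a \<otimes>\<^bsub>C\<^esub> c \<in> carrier C"
    using a x by (simp_all add: RC.m_lcomm)
  then show "h2 a \<otimes>\<^bsub>C\<^esub> y \<in> {x \<otimes>\<^bsub>C\<^esub> c | c. c \<in> carrier C}" by blast
qed (use x in auto)

lemma A_submodule_cyclic:
  assumes c: "c \<in> carrier C"
  shows "A_submodule {h2 a \<otimes>\<^bsub>C\<^esub> c | a. a \<in> carrier A}"
  unfolding A_submodule_def
proof (intro conjI ballI)
  have "\<zero>\<^bsub>C\<^esub> = h2 \<zero>\<^bsub>A\<^esub> \<otimes>\<^bsub>C\<^esub> c" using c by simp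
  then show "\<zero>\<^bsub>C\<^esub> \<in> {h2 a \<otimes>\<^bsub>C\<^esub> c | a. a \<in> carrier A}" by blast
next
  fix y z assume "y \<in> {h2 a \<otimes>\<^bsub>C\<^esub> c | a. a \<in> carrier A}" "z \<in> {h2 a \<otimes>\<^bsub>C\<^esub> c | a. a \<in> carrier A}"
  then obtain a a' where "y = h2 a \<otimes>\<^bsub>C\<^esub> c" "z = h2 a' \<otimes>\<^bsub>C\<^esub> c" "a \<in> carrier A" "a' \<in> carrier A" by blast
  then have "y \<oplus>\<^bsub>C\<^esub> z = h2 (a \<oplus>\<^bsub>A\<^esub> a') \<otimes>\<^bsub>C\<^esub> c" "a \<oplus>\<^bsub>A\<^esub> a' \<in> carrier A"
    using c by (simp_all add: RC.l_distr)
  then show "y \<oplus>\<^bsub>C\<^esub> z \<in> {h2 a \<otimes>\<^bsub>C\<^esub> c | a. a \<in> carrier A}" by blast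
next
  fix a' y assume a': "a' \<in> carrier A" and "y \<in> {h2 a \<otimes>\<^bsub>C\<^esub> c | a. a \<in> carrier A}"
  then obtain a where "y = h2 a \<otimes>\<^bsub>C\<^esub> c" "a \<in> carrier A" by blast
  then have "h2 a' \<otimes>\<^bsub>C\<^esub> y = h2 (a' \<otimes>\<^bsub>A\<^esub> a) \<otimes>\<^bsub>C\<^esub> c" "a' \<otimes>\<^bsub>A\<^esub> a \<in> carrier A"
    using a' c by (simp_all add: RC.m_assoc)
  then show "h2 a' \<otimes>\<^bsub>C\<^esub> y \<in> {h2 a \<otimes>\<^bsub>C\<^esub> c | a. a \<in> carrier A}" by blast
qed (use c in auto)

lemma exists_maximal_avoiding:
  "\<exists>W. A_submodule W \<and> avoiding W \<and> (\<forall>V. A_submodule V \<and> avoiding V \<and> W \<subseteq> V \<longrightarrow> V = W)"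
proof -
  let ?S = "{W. A_submodule W \<and> avoiding W}"
  have "A_submodule {\<zero>\<^bsub>C\<^esub>}" by (auto simp: A_submodule_def)
  moreover have "avoiding {\<zero>\<^bsub>C\<^esub>}"
    unfolding avoiding_def
  proof (intro ballI impI)
    fix a assume a: "a \<in> carrier A" and "h2 a \<in> {\<zero>\<^bsub>C\<^esub>}"
    then have "a = \<zero>\<^bsub>A\<^esub>" using inj_onD[OF inj_h2, of a "\<zero>\<^bsub>A\<^esub>"] by simp
    then show "h1 a \<otimes>\<^bsub>B\<^esub> b \<noteq> b" using b b_nonzero by simp
  qed
  ultimately have "?S \<noteq> {}" by blast
  then have "\<exists>M\<in>?S. \<forall>X\<in>?S. M \<subseteq> X \<longrightarrow> X = M"
  proof (rule subset_Zorn_nonempty)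
    fix Ch assume Ch: "Ch \<noteq> {}" "subset.chain ?S Ch"
    then have sub: "\<And>X. X \<in> Ch \<Longrightarrow> A_submodule X" and avoid: "\<And>X. X \<in> Ch \<Longrightarrow> avoiding X"
      and comp: "\<And>X Y. X \<in> Ch \<Longrightarrow> Y \<in> Ch \<Longrightarrow> X \<subseteq> Y \<or> Y \<subseteq> X"
      unfolding pred_on.chain_def by auto
    have "A_submodule (\<Union>Ch)"
      unfolding A_submodule_def
    proof (intro conjI ballI)
      show "\<Union>Ch \<subseteq> carrier C" using sub A_submodule_carrier by blast
      show "\<zero>\<^bsub>C\<^esub> \<in> \<Union>Ch" using Ch(1) sub A_submodule_zero by blast
    next
      fix x y assume "x \<in> \<Union>Ch" "y \<in> \<Union>Ch"
      then obtain X Y where "X \<in> Ch" "x \<in> X" "Y \<in> Ch" "y \<in> Y" by blast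
      then show "x \<oplus>\<^bsub>C\<^esub> y \<in> \<Union>Ch"
        using comp[of X Y] sub A_submodule_add by blast
    next
      fix a x assume "a \<in> carrier A" "x \<in> \<Union>Ch"
      then show "h2 a \<otimes>\<^bsub>C\<^esub> x \<in> \<Union>Ch" using sub A_submodule_smult by blast
    qed
    moreover have "avoiding (\<Union>Ch)" using avoid unfolding avoiding_def by blast
    ultimately show "\<Union>Ch \<in> ?S" by simp
  qed
  then show ?thesis by blast
qed

end

locale maximal_avoiding = regular_separation +
  fixes W
  assumes W_submodule: "A_submodule W" and W_avoiding: "avoiding W"
    and W_maximal: "\<And>V. A_submodule V \<Longrightarrow> avoiding V \<Longrightarrow> W \<subseteq> V \<Longrightarrow> V = W"
begin

lemma W_carrier: "x \<in> W \<Longrightarrow> x \<in> carrier C"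
  by (rule A_submodule_carrier[OF W_submodule])

lemma submodule_le_or_fixer:
  assumes S: "A_submodule S"
  shows "S \<subseteq> W \<or> (\<exists>a\<in>carrier A. \<exists>w\<in>W. \<exists>s\<in>S. h2 a = w \<oplus>\<^bsub>C\<^esub> s \<and> h1 a \<otimes>\<^bsub>B\<^esub> b = b)"
proof -
  let ?E = "{w \<oplus>\<^bsub>C\<^esub> s | w s. w \<in> W \<and> s \<in> S}"
  have E: "A_submodule ?E" by (rule A_submodule_sum[OF W_submodule S])
  have WE: "W \<subseteq> ?E"
  proof
    fix w assume w: "w \<in> W"
    then have "w = w \<oplus>\<^bsub>C\<^esub> \<zero>\<^bsub>C\<^esub>" using W_carrier by simp
    then show "w \<in> ?E" using w A_submodule_zero[OF S] by blast
  qed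
  have SE: "S \<subseteq> ?E"
  proof
    fix s assume s: "s \<in> S"
    then have "s = \<zero>\<^bsub>C\<^esub> \<oplus>\<^bsub>C\<^esub> s" using A_submodule_carrier[OF S] by simp
    then show "s \<in> ?E" using s A_submodule_zero[OF W_submodule] by blast
  qed
  show ?thesis
  proof (cases "avoiding ?E")
    case True
    then have "?E = W" by (rule W_maximal[OF E _ WE])
    with SE show ?thesis by blast
  next
    case False
    then obtain a where "a \<in> carrier A" "h2 a \<in> ?E" "h1 a \<otimes>\<^bsub>B\<^esub> b = b"
      unfolding avoiding_def by blast
    then show ?thesis by blast
  qed
qed

text \<open>For an idempotent \<open>e\<close>, the two fixers of \<open>b\<close> obtained otherwise would glue, along the
  decomposition \<open>1 = (1 - e) + e\<close>, to a fixer of \<open>b\<close> inside \<open>W\<close>.\<close>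

lemma idempotent_split:
  assumes e: "e \<in> carrier A" and ee: "e \<otimes>\<^bsub>A\<^esub> e = e"
  shows "(\<forall>c\<in>carrier C. h2 e \<otimes>\<^bsub>C\<^esub> c \<in> W) \<or> (\<forall>c\<in>carrier C. h2 (\<one>\<^bsub>A\<^esub> \<ominus>\<^bsub>A\<^esub> e) \<otimes>\<^bsub>C\<^esub> c \<in> W)"
proof (rule ccontr)
  assume neg: "\<not> ?thesis"
  have e': "\<one>\<^bsub>A\<^esub> \<ominus>\<^bsub>A\<^esub> e \<in> carrier A" using e by simp
  have "\<not> {h2 e \<otimes>\<^bsub>C\<^esub> c | c. c \<in> carrier C} \<subseteq> W" using neg by blast
  then obtain a w c where a: "a \<in> carrier A" "w \<in> W" "c \<in> carrier C"
      "h2 a = w \<oplus>\<^bsub>C\<^esub> h2 e \<otimes>\<^bsub>C\<^esub> c" "h1 a \<otimes>\<^bsub>B\<^esub> b = b"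
    using submodule_le_or_fixer[OF A_submodule_principal[OF H2.hom_closed[OF e]]] by blast
  have "\<not> {h2 (\<one>\<^bsub>A\<^esub> \<ominus>\<^bsub>A\<^esub> e) \<otimes>\<^bsub>C\<^esub> c | c. c \<in> carrier C} \<subseteq> W" using neg by blast
  then obtain a' w' c' where a': "a' \<in> carrier A" "w' \<in> W" "c' \<in> carrier C"
      "h2 a' = w' \<oplus>\<^bsub>C\<^esub> h2 (\<one>\<^bsub>A\<^esub> \<ominus>\<^bsub>A\<^esub> e) \<otimes>\<^bsub>C\<^esub> c'" "h1 a' \<otimes>\<^bsub>B\<^esub> b = b"
    using submodule_le_or_fixer[OF A_submodule_principal[OF H2.hom_closed[OF e']]] by blast
  have h2e: "h2 e \<in> carrier C" "h2 e \<otimes>\<^bsub>C\<^esub> h2 e = h2 e"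
    using e ee H2.hom_mult[of e e] by simp_all
  define glued where "glued = (\<one>\<^bsub>A\<^esub> \<ominus>\<^bsub>A\<^esub> e) \<otimes>\<^bsub>A\<^esub> a \<oplus>\<^bsub>A\<^esub> e \<otimes>\<^bsub>A\<^esub> a'"
  have glued: "glued \<in> carrier A" using e a a' by (simp add: glued_def)
  have "h2 glued = (\<one>\<^bsub>C\<^esub> \<ominus>\<^bsub>C\<^esub> h2 e) \<otimes>\<^bsub>C\<^esub> h2 a \<oplus>\<^bsub>C\<^esub> h2 e \<otimes>\<^bsub>C\<^esub> h2 a'"
    using e a a' by (simp add: glued_def h2_minus)
  also have "\<dots> = (\<one>\<^bsub>C\<^esub> \<ominus>\<^bsub>C\<^esub> h2 e) \<otimes>\<^bsub>C\<^esub> w \<oplus>\<^bsub>C\<^esub> h2 e \<otimes>\<^bsub>C\<^esub> w'"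
    unfolding a(4) a'(4) h2_minus[OF RA.one_closed e] H2.hom_one
    using RC.idempotent_combination[OF h2e] W_carrier a(2,3) a'(2,3) by blast
  also have "\<dots> \<in> W"
    using A_submodule_add[OF W_submodule A_submodule_smult[OF W_submodule e' a(2)]
        A_submodule_smult[OF W_submodule e a'(2)]]
    by (simp add: h2_minus[OF RA.one_closed e])
  finally have "h2 glued \<in> W" .
  moreover have "h1 glued \<otimes>\<^bsub>B\<^esub> b = b"
    using RB.combination_fixes[OF _ _ _ b a(5) a'(5)] e a(1) a'(1)
    by (simp add: glued_def h1_minus)
  ultimately show False using W_avoiding glued unfolding avoiding_def by blast
qed

lemma exists_preimage_mod:
  assumes c: "c \<in> carrier C"
  shows "\<exists>a\<in>carrier A. c \<ominus>\<^bsub>C\<^esub> h2 a \<in> W"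
proof (rule ccontr)
  assume neg: "\<not> ?thesis"
  have "c \<ominus>\<^bsub>C\<^esub> h2 \<zero>\<^bsub>A\<^esub> = h2 \<one>\<^bsub>A\<^esub> \<otimes>\<^bsub>C\<^esub> c" using c by (simp add: RC.minus_eq)
  then have "\<not> {h2 a \<otimes>\<^bsub>C\<^esub> c | a. a \<in> carrier A} \<subseteq> W" using neg by force
  then obtain a w a1 where a: "a \<in> carrier A" "w \<in> W" "a1 \<in> carrier A"
      "h2 a = w \<oplus>\<^bsub>C\<^esub> h2 a1 \<otimes>\<^bsub>C\<^esub> c" "h1 a \<otimes>\<^bsub>B\<^esub> b = b"
    using submodule_le_or_fixer[OF A_submodule_cyclic[OF c]] by blast
  obtain x where x: "x \<in> carrier A" "a1 = a1 \<otimes>\<^bsub>A\<^esub> a1 \<otimes>\<^bsub>A\<^esub> x" using regular[OF a(3)] by blast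
  define e where "e = a1 \<otimes>\<^bsub>A\<^esub> x"
  have e: "e \<in> carrier A" using x a by (simp add: e_def)
  have ee: "e \<otimes>\<^bsub>A\<^esub> e = e" and a1e: "a1 \<otimes>\<^bsub>A\<^esub> e = a1"
    unfolding e_def using RA.regular_idempotent[OF a(3) x(1,2)] by simp_all
  have wc: "w \<in> carrier C" using a(2) W_carrier by auto
  from idempotent_split[OF e ee] show False
  proof
    assume H: "\<forall>c\<in>carrier C. h2 e \<otimes>\<^bsub>C\<^esub> c \<in> W"
    have "h2 a1 \<otimes>\<^bsub>C\<^esub> (h2 e \<otimes>\<^bsub>C\<^esub> c) = h2 (a1 \<otimes>\<^bsub>A\<^esub> e) \<otimes>\<^bsub>C\<^esub> c"
      using a(3) e c by (simp add: RC.m_assoc)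
    then have "h2 a1 \<otimes>\<^bsub>C\<^esub> c = h2 a1 \<otimes>\<^bsub>C\<^esub> (h2 e \<otimes>\<^bsub>C\<^esub> c)"
      using a1e by simp
    also have "\<dots> \<in> W" using H c A_submodule_smult[OF W_submodule a(3)] by blast
    finally have "h2 a \<in> W" using a(4) A_submodule_add[OF W_submodule a(2)] by simp
    then show False using W_avoiding a(1,5) unfolding avoiding_def by blast
  next
    assume H: "\<forall>c\<in>carrier C. h2 (\<one>\<^bsub>A\<^esub> \<ominus>\<^bsub>A\<^esub> e) \<otimes>\<^bsub>C\<^esub> c \<in> W"
    have "c \<ominus>\<^bsub>C\<^esub> h2 (x \<otimes>\<^bsub>A\<^esub> a) = h2 (\<one>\<^bsub>A\<^esub> \<ominus>\<^bsub>A\<^esub> e) \<otimes>\<^bsub>C\<^esub> c \<ominus>\<^bsub>C\<^esub> h2 x \<otimes>\<^bsub>C\<^esub> w"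
    proof -
      have "h2 (x \<otimes>\<^bsub>A\<^esub> a) = h2 x \<otimes>\<^bsub>C\<^esub> (w \<oplus>\<^bsub>C\<^esub> h2 a1 \<otimes>\<^bsub>C\<^esub> c)" using x a by simp
      moreover have "h2 (\<one>\<^bsub>A\<^esub> \<ominus>\<^bsub>A\<^esub> e) = \<one>\<^bsub>C\<^esub> \<ominus>\<^bsub>C\<^esub> h2 a1 \<otimes>\<^bsub>C\<^esub> h2 x"
        using e x a by (simp add: h2_minus e_def)
      moreover have "c \<ominus>\<^bsub>C\<^esub> h2 x \<otimes>\<^bsub>C\<^esub> (w \<oplus>\<^bsub>C\<^esub> h2 a1 \<otimes>\<^bsub>C\<^esub> c)
         = (\<one>\<^bsub>C\<^esub> \<ominus>\<^bsub>C\<^esub> h2 a1 \<otimes>\<^bsub>C\<^esub> h2 x) \<otimes>\<^bsub>C\<^esub> c \<ominus>\<^bsub>C\<^esub> h2 x \<otimes>\<^bsub>C\<^esub> w"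
        using c wc H2.hom_closed[OF x(1)] H2.hom_closed[OF a(3)] by algebra
      ultimately show ?thesis by simp
    qed
    also have "\<dots> \<in> W"
      using A_submodule_minus[OF W_submodule] H c A_submodule_smult[OF W_submodule x(1) a(2)] by blast
    finally show False using neg x(1) a(1) by blast
  qed
qed

definition absorbed :: "'b set" where
  "absorbed = {y \<in> carrier B. \<exists>a\<in>carrier A. h2 a \<in> W \<and> h1 a \<otimes>\<^bsub>B\<^esub> y = y}"

lemma absorbed_add:
  assumes "y1 \<in> absorbed" "y2 \<in> absorbed"
  shows "y1 \<oplus>\<^bsub>B\<^esub> y2 \<in> absorbed"
proof -
  obtain a1 a2 where y1: "y1 \<in> carrier B" "a1 \<in> carrier A" "h2 a1 \<in> W" "h1 a1 \<otimes>\<^bsub>B\<^esub> y1 = y1"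
    and y2: "y2 \<in> carrier B" "a2 \<in> carrier A" "h2 a2 \<in> W" "h1 a2 \<otimes>\<^bsub>B\<^esub> y2 = y2"
    using assms unfolding absorbed_def by blast
  \<comment> \<open>\<open>a1 + a2 - a1 a2\<close> absorbs whatever \<open>a1\<close> or \<open>a2\<close> absorbs.\<close>
  define a where "a = a1 \<oplus>\<^bsub>A\<^esub> a2 \<ominus>\<^bsub>A\<^esub> a1 \<otimes>\<^bsub>A\<^esub> a2"
  have a: "a \<in> carrier A" using y1 y2 by (simp add: a_def)
  have "h2 a = h2 a1 \<oplus>\<^bsub>C\<^esub> h2 a2 \<ominus>\<^bsub>C\<^esub> h2 a1 \<otimes>\<^bsub>C\<^esub> h2 a2"
    using y1 y2 by (simp add: a_def h2_minus)
  also have "\<dots> \<in> W"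
    using A_submodule_minus[OF W_submodule A_submodule_add[OF W_submodule y1(3) y2(3)]
        A_submodule_smult[OF W_submodule y1(2) y2(3)]] .
  finally have h2a: "h2 a \<in> W" .
  have P: "h1 a1 \<in> carrier B" "h1 a2 \<in> carrier B" using y1 y2 by auto
  have "h1 a \<otimes>\<^bsub>B\<^esub> (y1 \<oplus>\<^bsub>B\<^esub> y2)
      = (h1 a1 \<oplus>\<^bsub>B\<^esub> h1 a2 \<ominus>\<^bsub>B\<^esub> h1 a1 \<otimes>\<^bsub>B\<^esub> h1 a2) \<otimes>\<^bsub>B\<^esub> (y1 \<oplus>\<^bsub>B\<^esub> y2)"
    using y1 y2 by (simp add: a_def h1_minus)
  also have "\<dots> = h1 a1 \<otimes>\<^bsub>B\<^esub> y1 \<oplus>\<^bsub>B\<^esub> h1 a2 \<otimes>\<^bsub>B\<^esub> y2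
      \<oplus>\<^bsub>B\<^esub> h1 a2 \<otimes>\<^bsub>B\<^esub> (y1 \<ominus>\<^bsub>B\<^esub> h1 a1 \<otimes>\<^bsub>B\<^esub> y1) \<oplus>\<^bsub>B\<^esub> h1 a1 \<otimes>\<^bsub>B\<^esub> (y2 \<ominus>\<^bsub>B\<^esub> h1 a2 \<otimes>\<^bsub>B\<^esub> y2)"
    using P y1(1) y2(1) by algebra
  also have "\<dots> = y1 \<oplus>\<^bsub>B\<^esub> y2" unfolding y1(4) y2(4) using P y1(1) y2(1) by algebra
  finally show ?thesis using h2a a y1 y2 unfolding absorbed_def by auto
qed

lemma absorbed_mult:
  assumes y: "y \<in> absorbed" and x: "x \<in> carrier B"
  shows "x \<otimes>\<^bsub>B\<^esub> y \<in> absorbed"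
proof -
  obtain a where a: "y \<in> carrier B" "a \<in> carrier A" "h2 a \<in> W" "h1 a \<otimes>\<^bsub>B\<^esub> y = y"
    using y unfolding absorbed_def by blast
  have "h1 a \<otimes>\<^bsub>B\<^esub> (x \<otimes>\<^bsub>B\<^esub> y) = x \<otimes>\<^bsub>B\<^esub> (h1 a \<otimes>\<^bsub>B\<^esub> y)" using a x by (simp add: RB.m_lcomm)
  then show ?thesis using a x unfolding absorbed_def by auto
qed

lemma absorbed_ideal: "ideal absorbed B"
proof (rule idealI)
  show "subgroup absorbed (add_monoid B)"
  proof (rule RB.add.subgroupI)
    have "\<zero>\<^bsub>B\<^esub> \<in> absorbed"
      unfolding absorbed_def using A_submodule_zero[OF W_submodule] RA.zero_closed by force
    then show "absorbed \<noteq> {}" by blast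
  next
    fix y assume y: "y \<in> absorbed"
    then have "\<ominus>\<^bsub>B\<^esub> \<one>\<^bsub>B\<^esub> \<otimes>\<^bsub>B\<^esub> y \<in> absorbed" by (intro absorbed_mult) auto
    then show "\<ominus>\<^bsub>B\<^esub> y \<in> absorbed" using y by (simp add: absorbed_def RB.l_minus)
  next
    fix x y assume "x \<in> absorbed" "y \<in> absorbed"
    then show "x \<oplus>\<^bsub>B\<^esub> y \<in> absorbed" by (rule absorbed_add)
  qed (auto simp: absorbed_def)
next
  fix x y assume y: "y \<in> absorbed" and x: "x \<in> carrier B"
  then show xy: "x \<otimes>\<^bsub>B\<^esub> y \<in> absorbed" by (rule absorbed_mult)
  have "y \<in> carrier B" using y by (simp add: absorbed_def)
  with xy x show "y \<otimes>\<^bsub>B\<^esub> x \<in> absorbed" by (simp add: RB.m_comm)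
qed (rule RB.ring_axioms)

lemma b_notin_absorbed: "b \<notin> absorbed"
  using W_avoiding unfolding absorbed_def avoiding_def by blast

text \<open>Two preimages of \<open>c\<close> modulo \<open>W\<close> differ by some \<open>d\<close> with \<open>h2 d \<in> W\<close>; regularity turns \<open>d\<close>
  into an idempotent \<open>e\<close> with \<open>h2 e \<in> W\<close> that absorbs every multiple of \<open>h1 d\<close>.\<close>

lemma preimages_mod_absorbed:
  assumes a: "a \<in> carrier A" and a': "a' \<in> carrier A" and c: "c \<in> carrier C"
    and ca: "c \<ominus>\<^bsub>C\<^esub> h2 a \<in> W" and ca': "c \<ominus>\<^bsub>C\<^esub> h2 a' \<in> W" and y: "y \<in> carrier B"
  shows "y \<otimes>\<^bsub>B\<^esub> h1 a \<ominus>\<^bsub>B\<^esub> y \<otimes>\<^bsub>B\<^esub> h1 a' \<in> absorbed"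
proof -
  define d where "d = a \<ominus>\<^bsub>A\<^esub> a'"
  have d: "d \<in> carrier A" using a a' by (simp add: d_def)
  have "h2 d = h2 a \<ominus>\<^bsub>C\<^esub> h2 a'" using a a' by (simp add: d_def h2_minus)
  also have "\<dots> = (c \<ominus>\<^bsub>C\<^esub> h2 a') \<ominus>\<^bsub>C\<^esub> (c \<ominus>\<^bsub>C\<^esub> h2 a)"
    using c H2.hom_closed[OF a] H2.hom_closed[OF a'] by algebra
  finally have h2d: "h2 d \<in> W" using A_submodule_minus[OF W_submodule ca' ca] by simp
  obtain x where x: "x \<in> carrier A" "d = d \<otimes>\<^bsub>A\<^esub> d \<otimes>\<^bsub>A\<^esub> x" using regular[OF d] by blast
  define e where "e = d \<otimes>\<^bsub>A\<^esub> x"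
  have e: "e \<in> carrier A" using x d by (simp add: e_def)
  have de: "d \<otimes>\<^bsub>A\<^esub> e = d" unfolding e_def using RA.regular_idempotent[OF d x] by simp
  have h2e: "h2 e \<in> W"
    using A_submodule_smult[OF W_submodule x(1) h2d] x d by (simp add: e_def RC.m_comm)
  define z where "z = y \<otimes>\<^bsub>B\<^esub> h1 a \<ominus>\<^bsub>B\<^esub> y \<otimes>\<^bsub>B\<^esub> h1 a'"
  have "h1 d = h1 a \<ominus>\<^bsub>B\<^esub> h1 a'" using a a' by (simp add: d_def h1_minus)
  then have z: "z = y \<otimes>\<^bsub>B\<^esub> h1 d"
    unfolding z_def using y H1.hom_closed[OF a] H1.hom_closed[OF a'] by algebra
  have "h1 e \<otimes>\<^bsub>B\<^esub> z = y \<otimes>\<^bsub>B\<^esub> h1 (d \<otimes>\<^bsub>A\<^esub> e)"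
    unfolding z using y d e by (simp add: RB.m_lcomm RB.m_comm)
  then have "h1 e \<otimes>\<^bsub>B\<^esub> z = z" by (simp add: de z)
  moreover have "z \<in> carrier B" using z y d by simp
  ultimately show ?thesis using e h2e unfolding absorbed_def z_def[symmetric] by blast
qed

definition preimage_mod :: "'c \<Rightarrow> 'a" where
  "preimage_mod c = (SOME a. a \<in> carrier A \<and> c \<ominus>\<^bsub>C\<^esub> h2 a \<in> W)"

lemma preimage_mod:
  "c \<in> carrier C \<Longrightarrow> preimage_mod c \<in> carrier A \<and> c \<ominus>\<^bsub>C\<^esub> h2 (preimage_mod c) \<in> W"
  unfolding preimage_mod_def using exists_preimage_mod by (rule someI2_bex)

definition separating_map :: "'b \<Rightarrow> 'c \<Rightarrow> 'b set" where
  "separating_map y c = absorbed +>\<^bsub>B\<^esub> (y \<otimes>\<^bsub>B\<^esub> h1 (preimage_mod c))"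

lemma separating_map_eq:
  assumes c: "c \<in> carrier C" and a: "a \<in> carrier A" and ca: "c \<ominus>\<^bsub>C\<^esub> h2 a \<in> W" and y: "y \<in> carrier B"
  shows "separating_map y c = absorbed +>\<^bsub>B\<^esub> (y \<otimes>\<^bsub>B\<^esub> h1 a)"
proof -
  have "y \<otimes>\<^bsub>B\<^esub> h1 (preimage_mod c) \<ominus>\<^bsub>B\<^esub> y \<otimes>\<^bsub>B\<^esub> h1 a \<in> absorbed"
    using preimage_mod[OF c] by (intro preimages_mod_absorbed[OF _ a c _ ca y]) auto
  then show ?thesis
    unfolding separating_map_def
    using RB.quotient_eq_iff_same_a_r_cos[OF absorbed_ideal] preimage_mod[OF c] a y by simp
qed

lemma separating_map_add_right:
  assumes x: "x \<in> carrier B" and y: "y1 \<in> carrier C" "y2 \<in> carrier C"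
  shows "separating_map x (y1 \<oplus>\<^bsub>C\<^esub> y2) = separating_map x y1 \<oplus>\<^bsub>B Quot absorbed\<^esub> separating_map x y2"
proof -
  interpret I: ideal absorbed B by (rule absorbed_ideal)
  obtain r1 r2 where r: "r1 \<in> carrier A" "y1 \<ominus>\<^bsub>C\<^esub> h2 r1 \<in> W" "r2 \<in> carrier A" "y2 \<ominus>\<^bsub>C\<^esub> h2 r2 \<in> W"
    using preimage_mod[OF y(1)] preimage_mod[OF y(2)] by blast
  have "(y1 \<oplus>\<^bsub>C\<^esub> y2) \<ominus>\<^bsub>C\<^esub> h2 (r1 \<oplus>\<^bsub>A\<^esub> r2) = (y1 \<ominus>\<^bsub>C\<^esub> h2 r1) \<oplus>\<^bsub>C\<^esub> (y2 \<ominus>\<^bsub>C\<^esub> h2 r2)"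
    unfolding H2.hom_add[OF r(1,3)] using y H2.hom_closed[OF r(1)] H2.hom_closed[OF r(3)] by algebra
  then have w: "(y1 \<oplus>\<^bsub>C\<^esub> y2) \<ominus>\<^bsub>C\<^esub> h2 (r1 \<oplus>\<^bsub>A\<^esub> r2) \<in> W"
    using A_submodule_add[OF W_submodule r(2) r(4)] by simp
  have "separating_map x (y1 \<oplus>\<^bsub>C\<^esub> y2) = absorbed +>\<^bsub>B\<^esub> (x \<otimes>\<^bsub>B\<^esub> h1 (r1 \<oplus>\<^bsub>A\<^esub> r2))"
    using separating_map_eq[OF _ _ w x] y r by simp
  also have "\<dots> = (absorbed +>\<^bsub>B\<^esub> (x \<otimes>\<^bsub>B\<^esub> h1 r1)) \<oplus>\<^bsub>B Quot absorbed\<^esub> (absorbed +>\<^bsub>B\<^esub> (x \<otimes>\<^bsub>B\<^esub> h1 r2))"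
    using ring_hom_add[OF I.rcos_ring_hom] x r by (simp add: RB.r_distr)
  also have "\<dots> = separating_map x y1 \<oplus>\<^bsub>B Quot absorbed\<^esub> separating_map x y2"
    using separating_map_eq x y r by simp
  finally show ?thesis .
qed

lemma separating_map_scalar:
  assumes a: "a \<in> carrier A" and x: "x \<in> carrier B" and y: "y \<in> carrier C"
  shows "separating_map (h1 a \<otimes>\<^bsub>B\<^esub> x) y = separating_map x (h2 a \<otimes>\<^bsub>C\<^esub> y)"
proof -
  obtain r where r: "r \<in> carrier A" "y \<ominus>\<^bsub>C\<^esub> h2 r \<in> W" using preimage_mod[OF y] by blast
  have "h2 a \<otimes>\<^bsub>C\<^esub> y \<ominus>\<^bsub>C\<^esub> h2 (a \<otimes>\<^bsub>A\<^esub> r) = h2 a \<otimes>\<^bsub>C\<^esub> (y \<ominus>\<^bsub>C\<^esub> h2 r)"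
    unfolding H2.hom_mult[OF a r(1)] using y H2.hom_closed[OF a] H2.hom_closed[OF r(1)] by algebra
  then have w: "h2 a \<otimes>\<^bsub>C\<^esub> y \<ominus>\<^bsub>C\<^esub> h2 (a \<otimes>\<^bsub>A\<^esub> r) \<in> W"
    using A_submodule_smult[OF W_submodule a r(2)] by simp
  have "separating_map x (h2 a \<otimes>\<^bsub>C\<^esub> y) = absorbed +>\<^bsub>B\<^esub> (x \<otimes>\<^bsub>B\<^esub> h1 (a \<otimes>\<^bsub>A\<^esub> r))"
    using separating_map_eq[OF _ _ w x] a y r by simp
  also have "x \<otimes>\<^bsub>B\<^esub> h1 (a \<otimes>\<^bsub>A\<^esub> r) = (h1 a \<otimes>\<^bsub>B\<^esub> x) \<otimes>\<^bsub>B\<^esub> h1 r"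
    unfolding H1.hom_mult[OF a r(1)] using x H1.hom_closed[OF a] H1.hom_closed[OF r(1)] by algebra
  also have "absorbed +>\<^bsub>B\<^esub> ((h1 a \<otimes>\<^bsub>B\<^esub> x) \<otimes>\<^bsub>B\<^esub> h1 r) = separating_map (h1 a \<otimes>\<^bsub>B\<^esub> x) y"
    using separating_map_eq a x y r by simp
  finally show ?thesis by simp
qed

lemma separating_map_balanced: "balanced (B Quot absorbed) separating_map"
proof -
  interpret I: ideal absorbed B by (rule absorbed_ideal)
  have hom: "(+>\<^bsub>B\<^esub>) absorbed \<in> ring_hom B (B Quot absorbed)" by (rule I.rcos_ring_hom)
  show ?thesis unfolding balanced_map_def
  proof (intro conjI ballI)
    show "abelian_group (B Quot absorbed)"
      using ring.is_abelian_group[OF I.quotient_is_ring] .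
  next
    fix x y assume "x \<in> carrier B" "y \<in> carrier C"
    then show "separating_map x y \<in> carrier (B Quot absorbed)"
      unfolding separating_map_def using ring_hom_closed[OF hom] preimage_mod by simp
  next
    fix x1 x2 y assume x: "x1 \<in> carrier B" "x2 \<in> carrier B" and y: "y \<in> carrier C"
    then show "separating_map (x1 \<oplus>\<^bsub>B\<^esub> x2) y
        = separating_map x1 y \<oplus>\<^bsub>B Quot absorbed\<^esub> separating_map x2 y"
      unfolding separating_map_def using ring_hom_add[OF hom] preimage_mod[OF y]
      by (simp add: RB.l_distr)
  qed (simp_all add: separating_map_add_right separating_map_scalar)
qed

lemma separating_map_nonzero: "separating_map b \<one>\<^bsub>C\<^esub> \<noteq> \<zero>\<^bsub>B Quot absorbed\<^esub>"
proof
  interpret I: ideal absorbed B by (rule absorbed_ideal)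
  assume zero: "separating_map b \<one>\<^bsub>C\<^esub> = \<zero>\<^bsub>B Quot absorbed\<^esub>"
  have "\<one>\<^bsub>C\<^esub> \<ominus>\<^bsub>C\<^esub> h2 \<one>\<^bsub>A\<^esub> = \<zero>\<^bsub>C\<^esub>" by (simp add: RC.minus_eq RC.r_neg)
  then have "separating_map b \<one>\<^bsub>C\<^esub> = absorbed +>\<^bsub>B\<^esub> b"
    using separating_map_eq[OF RC.one_closed RA.one_closed _ b] A_submodule_zero[OF W_submodule] b by simp
  then have "absorbed +>\<^bsub>B\<^esub> b = absorbed" using zero by (simp add: I.FactRing_zero)
  then have "b \<in> absorbed" using I.a_rcos_self[OF b] by simp
  then show False using b_notin_absorbed by simp
qed

end

lemma (in regular_separation) exists_separating_balanced_map:
  assumes f: "inj (f :: 'b set \<Rightarrow> 'g)"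
  shows "\<exists>(G::'g ring) \<Phi>. balanced G \<Phi> \<and> \<Phi> b \<one>\<^bsub>C\<^esub> \<noteq> \<zero>\<^bsub>G\<^esub>"
proof -
  obtain W where "A_submodule W" "avoiding W" "\<And>V. A_submodule V \<Longrightarrow> avoiding V \<Longrightarrow> W \<subseteq> V \<Longrightarrow> V = W"
    using exists_maximal_avoiding by blast
  then interpret maximal_avoiding A B C h1 h2 b W
    by unfold_locales
  have Q: "ring (B Quot absorbed)" by (rule ideal.quotient_is_ring[OF absorbed_ideal])
  have f': "inj_on f (carrier (B Quot absorbed))" using f by (rule inj_on_subset) simp
  have "balanced (image_ring f (B Quot absorbed)) (\<lambda>x y. f (separating_map x y))"
    by (rule balanced_map_image_ring[OF separating_map_balanced Q f'])
  moreover have "f (separating_map b \<one>\<^bsub>C\<^esub>) \<noteq> \<zero>\<^bsub>image_ring f (B Quot absorbed)\<^esub>"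
    using separating_map_nonzero f by (simp add: image_ring_zero inj_eq)
  ultimately show ?thesis by blast
qed

section \<open>A tensor product of the two algebras\<close>

context algebra_pair
begin

definition wf_pairs :: "('b \<times> 'c) list \<Rightarrow> bool" where
  "wf_pairs L \<longleftrightarrow> set L \<subseteq> carrier B \<times> carrier C"

definition eval_pairs :: "'g ring \<Rightarrow> ('b \<Rightarrow> 'c \<Rightarrow> 'g) \<Rightarrow> ('b \<times> 'c) list \<Rightarrow> 'g" where
  "eval_pairs G \<Phi> L = lsum G (\<lambda>p. \<Phi> (fst p) (snd p)) L"

definition mult_pairs :: "('b \<times> 'c) list \<Rightarrow> ('b \<times> 'c) list \<Rightarrow> ('b \<times> 'c) list" where
  "mult_pairs L M = concat (map (\<lambda>p. map (\<lambda>q. (fst p \<otimes>\<^bsub>B\<^esub> fst q, snd p \<otimes>\<^bsub>C\<^esub> snd q)) M) L)"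

definition neg_pairs :: "('b \<times> 'c) list \<Rightarrow> ('b \<times> 'c) list" where
  "neg_pairs L = map (\<lambda>p. (\<ominus>\<^bsub>B\<^esub> fst p, snd p)) L"

definition scale_map :: "('b \<Rightarrow> 'c \<Rightarrow> 'g) \<Rightarrow> 'b \<Rightarrow> 'c \<Rightarrow> 'b \<Rightarrow> 'c \<Rightarrow> 'g" where
  "scale_map \<Phi> x y = (\<lambda>x' y'. \<Phi> (x \<otimes>\<^bsub>B\<^esub> x') (y \<otimes>\<^bsub>C\<^esub> y'))"

definition mult_map :: "'g ring \<Rightarrow> ('b \<Rightarrow> 'c \<Rightarrow> 'g) \<Rightarrow> ('b \<times> 'c) list \<Rightarrow> 'b \<Rightarrow> 'c \<Rightarrow> 'g" where
  "mult_map G \<Phi> M = (\<lambda>x y. eval_pairs G (scale_map \<Phi> x y) M)"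

lemma wf_pairs_simps [simp]:
  "wf_pairs []"
  "wf_pairs (p # L) \<longleftrightarrow> fst p \<in> carrier B \<and> snd p \<in> carrier C \<and> wf_pairs L"
  "wf_pairs (L @ M) \<longleftrightarrow> wf_pairs L \<and> wf_pairs M"
  by (auto simp: wf_pairs_def mem_Times_iff)

lemma wf_pairsD: "wf_pairs L \<Longrightarrow> p \<in> set L \<Longrightarrow> fst p \<in> carrier B \<and> snd p \<in> carrier C"
  by (auto simp: wf_pairs_def)

lemma wf_neg_pairs: "wf_pairs L \<Longrightarrow> wf_pairs (neg_pairs L)"
  by (auto simp: wf_pairs_def neg_pairs_def)

lemma wf_mult_pairs: "wf_pairs L \<Longrightarrow> wf_pairs M \<Longrightarrow> wf_pairs (mult_pairs L M)"
  by (fastforce simp: wf_pairs_def mult_pairs_def)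

lemma eval_pairs_simps [simp]:
  "eval_pairs G \<Phi> [] = \<zero>\<^bsub>G\<^esub>"
  "eval_pairs G \<Phi> (p # L) = \<Phi> (fst p) (snd p) \<oplus>\<^bsub>G\<^esub> eval_pairs G \<Phi> L"
  by (simp_all add: eval_pairs_def)

lemma eval_pairs_closed:
  "balanced G \<Phi> \<Longrightarrow> wf_pairs L \<Longrightarrow> eval_pairs G \<Phi> L \<in> carrier G"
  unfolding eval_pairs_def
  by (rule abelian_group.lsum_closed[OF balanced_map_abelian_group])
    (auto dest: wf_pairsD balanced_map_closed)

lemma eval_pairs_append:
  "balanced G \<Phi> \<Longrightarrow> wf_pairs L \<Longrightarrow> wf_pairs M \<Longrightarrow>
    eval_pairs G \<Phi> (L @ M) = eval_pairs G \<Phi> L \<oplus>\<^bsub>G\<^esub> eval_pairs G \<Phi> M"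
  unfolding eval_pairs_def
  by (rule abelian_group.lsum_append[OF balanced_map_abelian_group])
    (auto dest: wf_pairsD balanced_map_closed)

lemma eval_pairs_cong:
  "wf_pairs L \<Longrightarrow> (\<And>x y. x \<in> carrier B \<Longrightarrow> y \<in> carrier C \<Longrightarrow> \<Phi> x y = \<Psi> x y) \<Longrightarrow>
    eval_pairs G \<Phi> L = eval_pairs G \<Psi> L"
  by (induction L) auto

lemma eval_pairs_add_map:
  assumes G: "abelian_group G" and L: "wf_pairs L"
    and "\<And>x y. x \<in> carrier B \<Longrightarrow> y \<in> carrier C \<Longrightarrow> \<Phi> x y \<in> carrier G"
    and "\<And>x y. x \<in> carrier B \<Longrightarrow> y \<in> carrier C \<Longrightarrow> \<Psi> x y \<in> carrier G"
  shows "eval_pairs G (\<lambda>x y. \<Phi> x y \<oplus>\<^bsub>G\<^esub> \<Psi> x y) L = eval_pairs G \<Phi> L \<oplus>\<^bsub>G\<^esub> eval_pairs G \<Psi> L"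
  unfolding eval_pairs_def using assms wf_pairsD[OF L]
  by (intro abelian_group.lsum_add[OF G]) auto

lemma balanced_scale_map:
  assumes \<Phi>: "balanced G \<Phi>" and x: "x \<in> carrier B" and y: "y \<in> carrier C"
  shows "balanced G (scale_map \<Phi> x y)"
  unfolding balanced_map_def scale_map_def
proof (intro conjI ballI)
  show "abelian_group G" by (rule balanced_map_abelian_group[OF \<Phi>])
next
  fix x' y' assume "x' \<in> carrier B" "y' \<in> carrier C"
  then show "\<Phi> (x \<otimes>\<^bsub>B\<^esub> x') (y \<otimes>\<^bsub>C\<^esub> y') \<in> carrier G"
    using balanced_map_closed[OF \<Phi>] x y by simp
next
  fix x1 x2 y' assume "x1 \<in> carrier B" "x2 \<in> carrier B" "y' \<in> carrier C"
  then show "\<Phi> (x \<otimes>\<^bsub>B\<^esub> (x1 \<oplus>\<^bsub>B\<^esub> x2)) (y \<otimes>\<^bsub>C\<^esub> y')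
      = \<Phi> (x \<otimes>\<^bsub>B\<^esub> x1) (y \<otimes>\<^bsub>C\<^esub> y') \<oplus>\<^bsub>G\<^esub> \<Phi> (x \<otimes>\<^bsub>B\<^esub> x2) (y \<otimes>\<^bsub>C\<^esub> y')"
    using balanced_map_add_left[OF \<Phi>] x y by (simp add: RB.r_distr)
next
  fix x' y1 y2 assume "x' \<in> carrier B" "y1 \<in> carrier C" "y2 \<in> carrier C"
  then show "\<Phi> (x \<otimes>\<^bsub>B\<^esub> x') (y \<otimes>\<^bsub>C\<^esub> (y1 \<oplus>\<^bsub>C\<^esub> y2))
      = \<Phi> (x \<otimes>\<^bsub>B\<^esub> x') (y \<otimes>\<^bsub>C\<^esub> y1) \<oplus>\<^bsub>G\<^esub> \<Phi> (x \<otimes>\<^bsub>B\<^esub> x') (y \<otimes>\<^bsub>C\<^esub> y2)"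
    using balanced_map_add_right[OF \<Phi>] x y by (simp add: RC.r_distr)
next
  fix a x' y' assume a: "a \<in> carrier A" and x': "x' \<in> carrier B" and y': "y' \<in> carrier C"
  have "\<Phi> (x \<otimes>\<^bsub>B\<^esub> (h1 a \<otimes>\<^bsub>B\<^esub> x')) (y \<otimes>\<^bsub>C\<^esub> y') = \<Phi> (h1 a \<otimes>\<^bsub>B\<^esub> (x \<otimes>\<^bsub>B\<^esub> x')) (y \<otimes>\<^bsub>C\<^esub> y')"
    using a x x' by (simp add: RB.m_lcomm)
  also have "\<dots> = \<Phi> (x \<otimes>\<^bsub>B\<^esub> x') (h2 a \<otimes>\<^bsub>C\<^esub> (y \<otimes>\<^bsub>C\<^esub> y'))"
    using balanced_map_scalar[OF \<Phi>] a x x' y y' by simp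
  also have "\<dots> = \<Phi> (x \<otimes>\<^bsub>B\<^esub> x') (y \<otimes>\<^bsub>C\<^esub> (h2 a \<otimes>\<^bsub>C\<^esub> y'))"
    using a y y' by (simp add: RC.m_lcomm)
  finally show "\<Phi> (x \<otimes>\<^bsub>B\<^esub> (h1 a \<otimes>\<^bsub>B\<^esub> x')) (y \<otimes>\<^bsub>C\<^esub> y') = \<Phi> (x \<otimes>\<^bsub>B\<^esub> x') (y \<otimes>\<^bsub>C\<^esub> (h2 a \<otimes>\<^bsub>C\<^esub> y'))" .
qed

lemma balanced_cong:
  assumes "balanced G \<Phi>" and "\<And>x y. x \<in> carrier B \<Longrightarrow> y \<in> carrier C \<Longrightarrow> \<Phi> x y = \<Psi> x y"
  shows "balanced G \<Psi>"
  using assms unfolding balanced_map_def by simp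

lemma balanced_mult_map:
  assumes \<Phi>: "balanced G \<Phi>" and M: "wf_pairs M"
  shows "balanced G (mult_map G \<Phi> M)"
proof (rule balanced_cong)
  show "balanced G (\<lambda>x y. lsum G (\<lambda>p. scale_map \<Phi> (fst p) (snd p) x y) M)"
    using balanced_scale_map[OF \<Phi>] wf_pairsD[OF M]
    by (intro balanced_map_lsum balanced_map_abelian_group[OF \<Phi>]) simp
  fix x y assume "x \<in> carrier B" "y \<in> carrier C"
  then show "lsum G (\<lambda>p. scale_map \<Phi> (fst p) (snd p) x y) M = mult_map G \<Phi> M x y"
    unfolding mult_map_def eval_pairs_def scale_map_def using wf_pairsD[OF M]
    by (intro abelian_group.lsum_cong[OF balanced_map_abelian_group[OF \<Phi>]])
      (simp add: RB.m_comm RC.m_comm)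
qed

lemma eval_mult_pairs:
  assumes \<Phi>: "balanced G \<Phi>" and L: "wf_pairs L" and M: "wf_pairs M"
  shows "eval_pairs G \<Phi> (mult_pairs L M) = eval_pairs G (mult_map G \<Phi> M) L"
proof -
  interpret G: abelian_group G by (rule balanced_map_abelian_group[OF \<Phi>])
  have "eval_pairs G \<Phi> (mult_pairs L M) = lsum G (lsum G (\<lambda>p. \<Phi> (fst p) (snd p)))
      (map (\<lambda>p. map (\<lambda>q. (fst p \<otimes>\<^bsub>B\<^esub> fst q, snd p \<otimes>\<^bsub>C\<^esub> snd q)) M) L)"
    unfolding eval_pairs_def mult_pairs_def
  proof (rule G.lsum_concat)
    fix l p assume "l \<in> set (map (\<lambda>p. map (\<lambda>q. (fst p \<otimes>\<^bsub>B\<^esub> fst q, snd p \<otimes>\<^bsub>C\<^esub> snd q)) M) L)"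
      and "p \<in> set l"
    then have "p \<in> set (mult_pairs L M)" unfolding mult_pairs_def set_concat by blast
    then show "\<Phi> (fst p) (snd p) \<in> carrier G"
      using wf_pairsD[OF wf_mult_pairs[OF L M]] balanced_map_closed[OF \<Phi>] by blast
  qed
  also have "\<dots> = eval_pairs G (mult_map G \<Phi> M) L"
    unfolding eval_pairs_def mult_map_def scale_map_def by (simp add: o_def G.lsum_map)
  finally show ?thesis .
qed

lemma eval_neg_pairs:
  assumes \<Phi>: "balanced G \<Phi>" and L: "wf_pairs L"
  shows "eval_pairs G \<Phi> (neg_pairs L) \<oplus>\<^bsub>G\<^esub> eval_pairs G \<Phi> L = \<zero>\<^bsub>G\<^esub>"
proof -
  interpret G: abelian_group G by (rule balanced_map_abelian_group[OF \<Phi>])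
  have "eval_pairs G \<Phi> (neg_pairs L) \<oplus>\<^bsub>G\<^esub> eval_pairs G \<Phi> L
      = eval_pairs G (\<lambda>x y. \<Phi> (\<ominus>\<^bsub>B\<^esub> x) y \<oplus>\<^bsub>G\<^esub> \<Phi> x y) L"
    unfolding neg_pairs_def eval_pairs_def G.lsum_map
    using eval_pairs_add_map[OF G.abelian_group_axioms L, of "\<lambda>x y. \<Phi> (\<ominus>\<^bsub>B\<^esub> x) y" \<Phi>]
      balanced_map_closed[OF \<Phi>]
    by (simp add: o_def eval_pairs_def)
  also have "\<dots> = eval_pairs G (\<lambda>x y. \<zero>\<^bsub>G\<^esub>) L"
  proof (rule eval_pairs_cong[OF L])
    fix x y assume x: "x \<in> carrier B" and y: "y \<in> carrier C"
    have "\<Phi> (\<ominus>\<^bsub>B\<^esub> x) y \<oplus>\<^bsub>G\<^esub> \<Phi> x y = \<Phi> (\<ominus>\<^bsub>B\<^esub> x \<oplus>\<^bsub>B\<^esub> x) y"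
      using balanced_map_add_left[OF \<Phi>] x y by simp
    also have "\<dots> = \<zero>\<^bsub>G\<^esub>"
      using balanced_map_zero_left[OF \<Phi> RB.ring_axioms y] x by (simp add: RB.l_neg)
    finally show "\<Phi> (\<ominus>\<^bsub>B\<^esub> x) y \<oplus>\<^bsub>G\<^esub> \<Phi> x y = \<zero>\<^bsub>G\<^esub>" .
  qed
  also have "\<dots> = \<zero>\<^bsub>G\<^esub>" unfolding eval_pairs_def by (rule G.lsum_zero)
  finally show ?thesis .
qed

lemma eval_mult_map_swap:
  assumes \<Phi>: "balanced G \<Phi>" and L: "wf_pairs L" and M: "wf_pairs M"
  shows "eval_pairs G (mult_map G \<Phi> M) L = eval_pairs G (mult_map G \<Phi> L) M"
proof -
  interpret G: abelian_group G by (rule balanced_map_abelian_group[OF \<Phi>])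
  have "eval_pairs G (mult_map G \<Phi> M) L
      = lsum G (\<lambda>p. lsum G (\<lambda>q. \<Phi> (fst p \<otimes>\<^bsub>B\<^esub> fst q) (snd p \<otimes>\<^bsub>C\<^esub> snd q)) M) L"
    by (simp add: eval_pairs_def mult_map_def scale_map_def)
  also have "\<dots> = lsum G (\<lambda>q. lsum G (\<lambda>p. \<Phi> (fst p \<otimes>\<^bsub>B\<^esub> fst q) (snd p \<otimes>\<^bsub>C\<^esub> snd q)) L) M"
    by (rule G.lsum_swap) (use wf_pairsD[OF L] wf_pairsD[OF M] balanced_map_closed[OF \<Phi>] in auto)
  also have "\<dots> = lsum G (\<lambda>q. lsum G (\<lambda>p. \<Phi> (fst q \<otimes>\<^bsub>B\<^esub> fst p) (snd q \<otimes>\<^bsub>C\<^esub> snd p)) L) M"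
    using wf_pairsD[OF L] wf_pairsD[OF M]
    by (intro G.lsum_cong) (simp add: RB.m_comm RC.m_comm)
  also have "\<dots> = eval_pairs G (mult_map G \<Phi> L) M"
    by (simp add: eval_pairs_def mult_map_def scale_map_def)
  finally show ?thesis .
qed

text \<open>Formal sums are identified when no balanced map into an abelian group with carrier type
  \<open>('b + 'c) set\<close> tells them apart. One such type suffices: the separating maps of the previous
  section live on quotients of \<open>B\<close> or of \<open>C\<close>, and both embed into it.\<close>

definition tensor_eq :: "('b \<times> 'c) list \<Rightarrow> ('b \<times> 'c) list \<Rightarrow> bool" where
  "tensor_eq L M \<longleftrightarrow> wf_pairs L \<and> wf_pairs M \<and>
     (\<forall>(G::('b + 'c) set ring) \<Phi>. balanced G \<Phi> \<longrightarrow> eval_pairs G \<Phi> L = eval_pairs G \<Phi> M)"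

definition tensor_class :: "('b \<times> 'c) list \<Rightarrow> ('b \<times> 'c) list set" where
  "tensor_class L = {M. tensor_eq L M}"

definition tensor_rep :: "('b \<times> 'c) list set \<Rightarrow> ('b \<times> 'c) list" where
  "tensor_rep X = (SOME L. wf_pairs L \<and> X = tensor_class L)"

definition tensor :: "('b \<times> 'c) list set ring" where
  "tensor = \<lparr>carrier = tensor_class ` {L. wf_pairs L},
     mult = (\<lambda>X Y. tensor_class (mult_pairs (tensor_rep X) (tensor_rep Y))),
     one = tensor_class [(\<one>\<^bsub>B\<^esub>, \<one>\<^bsub>C\<^esub>)], zero = tensor_class [],
     add = (\<lambda>X Y. tensor_class (tensor_rep X @ tensor_rep Y))\<rparr>"

definition tensor_eval :: "('b + 'c) set ring \<Rightarrow> ('b \<Rightarrow> 'c \<Rightarrow> ('b + 'c) set) \<Rightarrow> ('b \<times> 'c) list set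
    \<Rightarrow> ('b + 'c) set" where
  "tensor_eval G \<Phi> X = eval_pairs G \<Phi> (tensor_rep X)"

lemma tensor_simps:
  "carrier tensor = tensor_class ` {L. wf_pairs L}"
  "X \<otimes>\<^bsub>tensor\<^esub> Y = tensor_class (mult_pairs (tensor_rep X) (tensor_rep Y))"
  "\<one>\<^bsub>tensor\<^esub> = tensor_class [(\<one>\<^bsub>B\<^esub>, \<one>\<^bsub>C\<^esub>)]"
  "\<zero>\<^bsub>tensor\<^esub> = tensor_class []"
  "X \<oplus>\<^bsub>tensor\<^esub> Y = tensor_class (tensor_rep X @ tensor_rep Y)"
  by (simp_all add: tensor_def)

lemma tensor_class_in_carrier: "wf_pairs L \<Longrightarrow> tensor_class L \<in> carrier tensor"
  by (simp add: tensor_simps)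

lemma tensor_eq_sym: "tensor_eq L M \<Longrightarrow> tensor_eq M L"
  by (simp add: tensor_eq_def)

lemma tensor_eq_trans: "tensor_eq L M \<Longrightarrow> tensor_eq M N \<Longrightarrow> tensor_eq L N"
  by (simp add: tensor_eq_def)

lemma tensor_class_eq_iff:
  assumes M: "wf_pairs M"
  shows "tensor_class L = tensor_class M \<longleftrightarrow> tensor_eq L M"
proof
  assume "tensor_class L = tensor_class M"
  moreover have "M \<in> tensor_class M" using M by (simp add: tensor_class_def tensor_eq_def)
  ultimately show "tensor_eq L M" unfolding tensor_class_def by blast
next
  assume "tensor_eq L M"
  then show "tensor_class L = tensor_class M"
    unfolding tensor_class_def using tensor_eq_sym tensor_eq_trans by blast
qed

lemma tensor_rep:
  "X \<in> carrier tensor \<Longrightarrow> wf_pairs (tensor_rep X) \<and> X = tensor_class (tensor_rep X)"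
  unfolding tensor_rep_def by (rule someI_ex) (auto simp: tensor_simps)

lemma tensor_rep_wf: "X \<in> carrier tensor \<Longrightarrow> wf_pairs (tensor_rep X)"
  using tensor_rep by blast

lemma tensor_rep_class: "wf_pairs L \<Longrightarrow> tensor_eq L (tensor_rep (tensor_class L))"
  using tensor_rep[OF tensor_class_in_carrier] tensor_class_eq_iff by metis

lemma tensor_eval_class:
  "balanced G \<Phi> \<Longrightarrow> wf_pairs L \<Longrightarrow> tensor_eval G \<Phi> (tensor_class L) = eval_pairs G \<Phi> L"
  using tensor_rep_class unfolding tensor_eval_def tensor_eq_def by metis

lemma tensor_eqI:
  assumes X: "X \<in> carrier tensor" and Y: "Y \<in> carrier tensor"
    and eval: "\<And>G \<Phi>. balanced G \<Phi> \<Longrightarrow> tensor_eval G \<Phi> X = tensor_eval G \<Phi> Y"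
  shows "X = Y"
proof -
  have "tensor_eq (tensor_rep X) (tensor_rep Y)"
    using tensor_rep[OF X] tensor_rep[OF Y] eval unfolding tensor_eq_def tensor_eval_def by blast
  then show ?thesis
    using tensor_rep[OF X] tensor_rep[OF Y] tensor_class_eq_iff by metis
qed

lemma tensor_eval_closed:
  "balanced G \<Phi> \<Longrightarrow> X \<in> carrier tensor \<Longrightarrow> tensor_eval G \<Phi> X \<in> carrier G"
  unfolding tensor_eval_def using eval_pairs_closed tensor_rep by blast

lemma tensor_add_closed:
  "X \<in> carrier tensor \<Longrightarrow> Y \<in> carrier tensor \<Longrightarrow> X \<oplus>\<^bsub>tensor\<^esub> Y \<in> carrier tensor"
  unfolding tensor_simps(5) by (intro tensor_class_in_carrier) (simp add: tensor_rep)

lemma tensor_mult_closed: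
  "X \<in> carrier tensor \<Longrightarrow> Y \<in> carrier tensor \<Longrightarrow> X \<otimes>\<^bsub>tensor\<^esub> Y \<in> carrier tensor"
  unfolding tensor_simps(2) by (intro tensor_class_in_carrier wf_mult_pairs) (simp_all add: tensor_rep)

lemma tensor_zero_closed: "\<zero>\<^bsub>tensor\<^esub> \<in> carrier tensor"
  unfolding tensor_simps(4) by (rule tensor_class_in_carrier) simp

lemma tensor_one_closed: "\<one>\<^bsub>tensor\<^esub> \<in> carrier tensor"
  unfolding tensor_simps(3) by (rule tensor_class_in_carrier) simp

lemmas tensor_closed = tensor_add_closed tensor_mult_closed tensor_zero_closed tensor_one_closed

lemma tensor_eval_add:
  assumes \<Phi>: "balanced G \<Phi>" and X: "X \<in> carrier tensor" and Y: "Y \<in> carrier tensor"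
  shows "tensor_eval G \<Phi> (X \<oplus>\<^bsub>tensor\<^esub> Y) = tensor_eval G \<Phi> X \<oplus>\<^bsub>G\<^esub> tensor_eval G \<Phi> Y"
  using tensor_rep_wf[OF X] tensor_rep_wf[OF Y]
  by (simp add: tensor_simps(5) tensor_eval_class[OF \<Phi>] eval_pairs_append[OF \<Phi>])
    (simp add: tensor_eval_def)

lemma tensor_eval_mult:
  assumes \<Phi>: "balanced G \<Phi>" and X: "X \<in> carrier tensor" and Y: "Y \<in> carrier tensor"
  shows "tensor_eval G \<Phi> (X \<otimes>\<^bsub>tensor\<^esub> Y) = tensor_eval G (mult_map G \<Phi> (tensor_rep Y)) X"
  using tensor_rep_wf[OF X] tensor_rep_wf[OF Y]
  by (simp add: tensor_simps(2) tensor_eval_class[OF \<Phi>] wf_mult_pairs eval_mult_pairs[OF \<Phi>])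
    (simp add: tensor_eval_def)

lemma tensor_eval_zero: "balanced G \<Phi> \<Longrightarrow> tensor_eval G \<Phi> \<zero>\<^bsub>tensor\<^esub> = \<zero>\<^bsub>G\<^esub>"
  by (simp add: tensor_simps(4) tensor_eval_class)

definition tensor_pure :: "'b \<Rightarrow> 'c \<Rightarrow> ('b \<times> 'c) list set" where
  "tensor_pure x y = tensor_class [(x, y)]"

lemma tensor_pure_in_carrier: "x \<in> carrier B \<Longrightarrow> y \<in> carrier C \<Longrightarrow> tensor_pure x y \<in> carrier tensor"
  by (simp add: tensor_pure_def tensor_class_in_carrier)

lemma tensor_one_eq_pure: "\<one>\<^bsub>tensor\<^esub> = tensor_pure \<one>\<^bsub>B\<^esub> \<one>\<^bsub>C\<^esub>"
  by (simp add: tensor_simps tensor_pure_def)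

lemma tensor_eval_pure:
  assumes \<Phi>: "balanced G \<Phi>" and x: "x \<in> carrier B" and y: "y \<in> carrier C"
  shows "tensor_eval G \<Phi> (tensor_pure x y) = \<Phi> x y"
proof -
  interpret G: abelian_group G by (rule balanced_map_abelian_group[OF \<Phi>])
  show ?thesis
    using tensor_eval_class[OF \<Phi>, of "[(x, y)]"] balanced_map_closed[OF \<Phi> x y] x y
    by (simp add: tensor_pure_def)
qed

lemma tensor_eval_one_mult:
  assumes \<Phi>: "balanced G \<Phi>" and X: "X \<in> carrier tensor"
  shows "tensor_eval G \<Phi> (\<one>\<^bsub>tensor\<^esub> \<otimes>\<^bsub>tensor\<^esub> X) = tensor_eval G \<Phi> X"
proof -
  note wf = tensor_rep_wf[OF X]
  have "tensor_eval G \<Phi> (\<one>\<^bsub>tensor\<^esub> \<otimes>\<^bsub>tensor\<^esub> X)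
      = tensor_eval G (mult_map G \<Phi> (tensor_rep X)) (tensor_pure \<one>\<^bsub>B\<^esub> \<one>\<^bsub>C\<^esub>)"
    using tensor_eval_mult[OF \<Phi> tensor_one_closed X] by (simp only: tensor_one_eq_pure)
  also have "\<dots> = mult_map G \<Phi> (tensor_rep X) \<one>\<^bsub>B\<^esub> \<one>\<^bsub>C\<^esub>"
    by (rule tensor_eval_pure[OF balanced_mult_map[OF \<Phi> wf] RB.one_closed RC.one_closed])
  also have "\<dots> = tensor_eval G \<Phi> X"
    unfolding mult_map_def scale_map_def tensor_eval_def by (rule eval_pairs_cong[OF wf]) simp
  finally show ?thesis .
qed

lemma tensor_eval_mult_assoc:
  assumes \<Phi>: "balanced G \<Phi>"
    and X: "X \<in> carrier tensor" and Y: "Y \<in> carrier tensor" and Z: "Z \<in> carrier tensor"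
  shows "tensor_eval G \<Phi> ((X \<otimes>\<^bsub>tensor\<^esub> Y) \<otimes>\<^bsub>tensor\<^esub> Z)
    = tensor_eval G \<Phi> (X \<otimes>\<^bsub>tensor\<^esub> (Y \<otimes>\<^bsub>tensor\<^esub> Z))"
proof -
  note wf = tensor_rep_wf[OF X] tensor_rep_wf[OF Y] tensor_rep_wf[OF Z]
  have \<Phi>Z: "balanced G (mult_map G \<Phi> (tensor_rep Z))" by (rule balanced_mult_map[OF \<Phi> wf(3)])
  have "mult_map G \<Phi> (tensor_rep (Y \<otimes>\<^bsub>tensor\<^esub> Z)) x y = mult_map G (mult_map G \<Phi> (tensor_rep Z)) (tensor_rep Y) x y"
    if x: "x \<in> carrier B" and y: "y \<in> carrier C" for x y
  proof -
    have "mult_map G \<Phi> (tensor_rep (Y \<otimes>\<^bsub>tensor\<^esub> Z)) x y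
        = tensor_eval G (mult_map G (scale_map \<Phi> x y) (tensor_rep Z)) Y"
      using tensor_eval_mult[OF balanced_scale_map[OF \<Phi> x y] Y Z]
      by (simp add: mult_map_def tensor_eval_def)
    also have "\<dots> = tensor_eval G (scale_map (mult_map G \<Phi> (tensor_rep Z)) x y) Y"
      unfolding tensor_eval_def mult_map_def scale_map_def
      using wf x y by (intro eval_pairs_cong eval_pairs_cong) (simp_all add: RB.m_assoc RC.m_assoc)
    finally show ?thesis by (simp add: mult_map_def tensor_eval_def)
  qed
  then have "tensor_eval G (mult_map G \<Phi> (tensor_rep (Y \<otimes>\<^bsub>tensor\<^esub> Z))) X
      = tensor_eval G (mult_map G (mult_map G \<Phi> (tensor_rep Z)) (tensor_rep Y)) X"
    unfolding tensor_eval_def by (intro eval_pairs_cong[OF wf(1)])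
  then show ?thesis
    using tensor_eval_mult[OF \<Phi> tensor_mult_closed[OF X Y] Z] tensor_eval_mult[OF \<Phi>Z X Y]
      tensor_eval_mult[OF \<Phi> X tensor_mult_closed[OF Y Z]] by simp
qed

lemma tensor_neg_add:
  assumes X: "X \<in> carrier tensor"
  shows "tensor_class (neg_pairs (tensor_rep X)) \<oplus>\<^bsub>tensor\<^esub> X = \<zero>\<^bsub>tensor\<^esub>"
proof -
  have N: "tensor_class (neg_pairs (tensor_rep X)) \<in> carrier tensor"
    by (simp add: tensor_class_in_carrier wf_neg_pairs tensor_rep_wf[OF X])
  show ?thesis
  proof (rule tensor_eqI)
    fix G :: "('b + 'c) set ring" and \<Phi> assume \<Phi>: "balanced G \<Phi>"
    show "tensor_eval G \<Phi> (tensor_class (neg_pairs (tensor_rep X)) \<oplus>\<^bsub>tensor\<^esub> X)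
        = tensor_eval G \<Phi> \<zero>\<^bsub>tensor\<^esub>"
      using eval_neg_pairs[OF \<Phi>] tensor_rep_wf[OF X] N X
      by (simp add: tensor_eval_add[OF \<Phi>] tensor_eval_class[OF \<Phi>] wf_neg_pairs tensor_eval_zero[OF \<Phi>])
        (simp add: tensor_eval_def)
  qed (use N X in \<open>simp_all add: tensor_closed\<close>)
qed

lemma tensor_abelian_group: "abelian_group tensor"
proof (rule abelian_groupI)
  fix X Y Z assume X: "X \<in> carrier tensor" and Y: "Y \<in> carrier tensor" and Z: "Z \<in> carrier tensor"
  show "X \<oplus>\<^bsub>tensor\<^esub> Y \<oplus>\<^bsub>tensor\<^esub> Z = X \<oplus>\<^bsub>tensor\<^esub> (Y \<oplus>\<^bsub>tensor\<^esub> Z)"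
  proof (rule tensor_eqI)
    fix G :: "('b + 'c) set ring" and \<Phi> assume \<Phi>: "balanced G \<Phi>"
    then interpret G: abelian_group G by (rule balanced_map_abelian_group)
    show "tensor_eval G \<Phi> (X \<oplus>\<^bsub>tensor\<^esub> Y \<oplus>\<^bsub>tensor\<^esub> Z) = tensor_eval G \<Phi> (X \<oplus>\<^bsub>tensor\<^esub> (Y \<oplus>\<^bsub>tensor\<^esub> Z))"
      using X Y Z by (simp add: tensor_eval_add[OF \<Phi>] tensor_closed tensor_eval_closed[OF \<Phi>] G.a_assoc)
  qed (use X Y Z in \<open>simp_all add: tensor_closed\<close>)
next
  fix X Y assume X: "X \<in> carrier tensor" and Y: "Y \<in> carrier tensor"
  show "X \<oplus>\<^bsub>tensor\<^esub> Y = Y \<oplus>\<^bsub>tensor\<^esub> X"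
  proof (rule tensor_eqI)
    fix G :: "('b + 'c) set ring" and \<Phi> assume \<Phi>: "balanced G \<Phi>"
    then interpret G: abelian_group G by (rule balanced_map_abelian_group)
    show "tensor_eval G \<Phi> (X \<oplus>\<^bsub>tensor\<^esub> Y) = tensor_eval G \<Phi> (Y \<oplus>\<^bsub>tensor\<^esub> X)"
      using X Y by (simp add: tensor_eval_add[OF \<Phi>] tensor_eval_closed[OF \<Phi>] G.a_comm)
  qed (use X Y in \<open>simp_all add: tensor_closed\<close>)
next
  fix X assume X: "X \<in> carrier tensor"
  show "\<zero>\<^bsub>tensor\<^esub> \<oplus>\<^bsub>tensor\<^esub> X = X"
  proof (rule tensor_eqI)
    fix G :: "('b + 'c) set ring" and \<Phi> assume \<Phi>: "balanced G \<Phi>"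
    then interpret G: abelian_group G by (rule balanced_map_abelian_group)
    show "tensor_eval G \<Phi> (\<zero>\<^bsub>tensor\<^esub> \<oplus>\<^bsub>tensor\<^esub> X) = tensor_eval G \<Phi> X"
      using X by (simp add: tensor_eval_add[OF \<Phi>] tensor_closed tensor_eval_closed[OF \<Phi>] tensor_eval_zero[OF \<Phi>])
  qed (use X in \<open>simp_all add: tensor_closed\<close>)
  show "\<exists>Y\<in>carrier tensor. Y \<oplus>\<^bsub>tensor\<^esub> X = \<zero>\<^bsub>tensor\<^esub>"
    using tensor_neg_add[OF X] tensor_rep_wf[OF X] by (blast intro: tensor_class_in_carrier wf_neg_pairs)
qed (simp_all add: tensor_closed)

lemma tensor_comm_monoid: "comm_monoid tensor"
proof (rule comm_monoidI)
  fix X Y Z assume X: "X \<in> carrier tensor" and Y: "Y \<in> carrier tensor" and Z: "Z \<in> carrier tensor"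
  show "X \<otimes>\<^bsub>tensor\<^esub> Y \<otimes>\<^bsub>tensor\<^esub> Z = X \<otimes>\<^bsub>tensor\<^esub> (Y \<otimes>\<^bsub>tensor\<^esub> Z)"
    using X Y Z by (intro tensor_eqI tensor_closed) (simp_all add: tensor_eval_mult_assoc)
next
  fix X assume X: "X \<in> carrier tensor"
  show "\<one>\<^bsub>tensor\<^esub> \<otimes>\<^bsub>tensor\<^esub> X = X"
    using X by (intro tensor_eqI tensor_closed) (simp_all add: tensor_eval_one_mult)
next
  fix X Y assume X: "X \<in> carrier tensor" and Y: "Y \<in> carrier tensor"
  show "X \<otimes>\<^bsub>tensor\<^esub> Y = Y \<otimes>\<^bsub>tensor\<^esub> X"
  proof (rule tensor_eqI)
    fix G :: "('b + 'c) set ring" and \<Phi> assume \<Phi>: "balanced G \<Phi>"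
    show "tensor_eval G \<Phi> (X \<otimes>\<^bsub>tensor\<^esub> Y) = tensor_eval G \<Phi> (Y \<otimes>\<^bsub>tensor\<^esub> X)"
    proof -
      have "tensor_eval G (mult_map G \<Phi> (tensor_rep Y)) X = tensor_eval G (mult_map G \<Phi> (tensor_rep X)) Y"
        unfolding tensor_eval_def using eval_mult_map_swap[OF \<Phi>] tensor_rep_wf[OF X] tensor_rep_wf[OF Y] by simp
      then show ?thesis by (simp add: tensor_eval_mult[OF \<Phi> X Y] tensor_eval_mult[OF \<Phi> Y X])
    qed
  qed (use X Y in \<open>simp_all add: tensor_closed\<close>)
qed (simp_all add: tensor_closed)

lemma tensor_cring: "cring tensor"
proof (rule cringI[OF tensor_abelian_group tensor_comm_monoid])
  fix X Y Z assume X: "X \<in> carrier tensor" and Y: "Y \<in> carrier tensor" and Z: "Z \<in> carrier tensor"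
  show "(X \<oplus>\<^bsub>tensor\<^esub> Y) \<otimes>\<^bsub>tensor\<^esub> Z = X \<otimes>\<^bsub>tensor\<^esub> Z \<oplus>\<^bsub>tensor\<^esub> Y \<otimes>\<^bsub>tensor\<^esub> Z"
  proof (rule tensor_eqI)
    fix G :: "('b + 'c) set ring" and \<Phi> assume \<Phi>: "balanced G \<Phi>"
    have \<Phi>Z: "balanced G (mult_map G \<Phi> (tensor_rep Z))"
      using balanced_mult_map[OF \<Phi> tensor_rep_wf[OF Z]] .
    show "tensor_eval G \<Phi> ((X \<oplus>\<^bsub>tensor\<^esub> Y) \<otimes>\<^bsub>tensor\<^esub> Z) = tensor_eval G \<Phi> (X \<otimes>\<^bsub>tensor\<^esub> Z \<oplus>\<^bsub>tensor\<^esub> Y \<otimes>\<^bsub>tensor\<^esub> Z)"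
      using X Y Z
      by (simp add: tensor_eval_mult[OF \<Phi>] tensor_eval_add[OF \<Phi>] tensor_eval_add[OF \<Phi>Z] tensor_closed)
  qed (use X Y Z in \<open>simp_all add: tensor_closed\<close>)
qed

lemma tensor_pure_eqI:
  assumes "x \<in> carrier B" "y \<in> carrier C" "X \<in> carrier tensor"
    and "\<And>(G::('b + 'c) set ring) \<Phi>. balanced G \<Phi> \<Longrightarrow> \<Phi> x y = tensor_eval G \<Phi> X"
  shows "tensor_pure x y = X"
  using assms by (intro tensor_eqI) (simp_all add: tensor_pure_in_carrier tensor_eval_pure)

lemma tensor_pure_mult:
  assumes x: "x \<in> carrier B" "x' \<in> carrier B" and y: "y \<in> carrier C" "y' \<in> carrier C"
  shows "tensor_pure x y \<otimes>\<^bsub>tensor\<^esub> tensor_pure x' y' = tensor_pure (x \<otimes>\<^bsub>B\<^esub> x') (y \<otimes>\<^bsub>C\<^esub> y')"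
proof (rule sym, rule tensor_pure_eqI)
  fix G :: "('b + 'c) set ring" and \<Phi> assume \<Phi>: "balanced G \<Phi>"
  have "tensor_eval G \<Phi> (tensor_pure x y \<otimes>\<^bsub>tensor\<^esub> tensor_pure x' y')
      = mult_map G \<Phi> (tensor_rep (tensor_pure x' y')) x y"
    using tensor_eval_mult[OF \<Phi>] tensor_eval_pure[OF balanced_mult_map[OF \<Phi>]] x y
    by (simp add: tensor_pure_in_carrier tensor_rep_wf)
  also have "\<dots> = \<Phi> (x \<otimes>\<^bsub>B\<^esub> x') (y \<otimes>\<^bsub>C\<^esub> y')"
    using tensor_eval_pure[OF balanced_scale_map[OF \<Phi> x(1) y(1)] x(2) y(2)]
    by (simp add: mult_map_def tensor_eval_def scale_map_def)
  finally show "\<Phi> (x \<otimes>\<^bsub>B\<^esub> x') (y \<otimes>\<^bsub>C\<^esub> y')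
      = tensor_eval G \<Phi> (tensor_pure x y \<otimes>\<^bsub>tensor\<^esub> tensor_pure x' y')" by simp
qed (use x y in \<open>simp_all add: tensor_mult_closed tensor_pure_in_carrier\<close>)

lemma tensor_pure_add_left:
  assumes x: "x1 \<in> carrier B" "x2 \<in> carrier B" and y: "y \<in> carrier C"
  shows "tensor_pure (x1 \<oplus>\<^bsub>B\<^esub> x2) y = tensor_pure x1 y \<oplus>\<^bsub>tensor\<^esub> tensor_pure x2 y"
  using x y
  by (intro tensor_pure_eqI)
    (simp_all add: tensor_add_closed tensor_pure_in_carrier tensor_eval_add tensor_eval_pure
      balanced_map_add_left)

lemma tensor_pure_add_right:
  assumes x: "x \<in> carrier B" and y: "y1 \<in> carrier C" "y2 \<in> carrier C"
  shows "tensor_pure x (y1 \<oplus>\<^bsub>C\<^esub> y2) = tensor_pure x y1 \<oplus>\<^bsub>tensor\<^esub> tensor_pure x y2"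
  using x y
  by (intro tensor_pure_eqI)
    (simp_all add: tensor_add_closed tensor_pure_in_carrier tensor_eval_add tensor_eval_pure
      balanced_map_add_right)

lemma tensor_pure_scalar:
  assumes "a \<in> carrier A" "x \<in> carrier B" "y \<in> carrier C"
  shows "tensor_pure (h1 a \<otimes>\<^bsub>B\<^esub> x) y = tensor_pure x (h2 a \<otimes>\<^bsub>C\<^esub> y)"
  using assms
  by (intro tensor_pure_eqI) (simp_all add: tensor_pure_in_carrier tensor_eval_pure balanced_map_scalar)

lemma tensor_pure_eq_zeroD:
  assumes "tensor_pure x y = \<zero>\<^bsub>tensor\<^esub>" "x \<in> carrier B" "y \<in> carrier C"
    and "balanced (G::('b + 'c) set ring) \<Phi>"
  shows "\<Phi> x y = \<zero>\<^bsub>G\<^esub>"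
  using tensor_eval_pure[OF assms(4) assms(2,3)] tensor_eval_zero[OF assms(4)] assms(1) by simp

definition tensor_inl :: "'b \<Rightarrow> ('b \<times> 'c) list set" where
  "tensor_inl x = tensor_pure x \<one>\<^bsub>C\<^esub>"

definition tensor_inr :: "'c \<Rightarrow> ('b \<times> 'c) list set" where
  "tensor_inr y = tensor_pure \<one>\<^bsub>B\<^esub> y"

lemma tensor_inl_hom: "tensor_inl \<in> ring_hom B tensor"
proof (rule ring_hom_memI)
  fix x y assume x: "x \<in> carrier B" and y: "y \<in> carrier B"
  show "tensor_inl (x \<otimes>\<^bsub>B\<^esub> y) = tensor_inl x \<otimes>\<^bsub>tensor\<^esub> tensor_inl y"
    using tensor_pure_mult[OF x y RC.one_closed RC.one_closed] by (simp add: tensor_inl_def)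
  show "tensor_inl (x \<oplus>\<^bsub>B\<^esub> y) = tensor_inl x \<oplus>\<^bsub>tensor\<^esub> tensor_inl y"
    using tensor_pure_add_left[OF x y RC.one_closed] by (simp add: tensor_inl_def)
qed (simp_all add: tensor_inl_def tensor_pure_in_carrier tensor_one_eq_pure)

lemma tensor_inr_hom: "tensor_inr \<in> ring_hom C tensor"
proof (rule ring_hom_memI)
  fix x y assume x: "x \<in> carrier C" and y: "y \<in> carrier C"
  show "tensor_inr (x \<otimes>\<^bsub>C\<^esub> y) = tensor_inr x \<otimes>\<^bsub>tensor\<^esub> tensor_inr y"
    using tensor_pure_mult[OF RB.one_closed RB.one_closed x y] by (simp add: tensor_inr_def)
  show "tensor_inr (x \<oplus>\<^bsub>C\<^esub> y) = tensor_inr x \<oplus>\<^bsub>tensor\<^esub> tensor_inr y"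
    using tensor_pure_add_right[OF RB.one_closed x y] by (simp add: tensor_inr_def)
qed (simp_all add: tensor_inr_def tensor_pure_in_carrier tensor_one_eq_pure)

lemma tensor_inl_inr: "a \<in> carrier A \<Longrightarrow> tensor_inl (h1 a) = tensor_inr (h2 a)"
  using tensor_pure_scalar[of a "\<one>\<^bsub>B\<^esub>" "\<one>\<^bsub>C\<^esub>"] by (simp add: tensor_inl_def tensor_inr_def)

lemma inj_on_tensor_inl:
  assumes separating: "\<And>x. x \<in> carrier B \<Longrightarrow> x \<noteq> \<zero>\<^bsub>B\<^esub> \<Longrightarrow>
    \<exists>(G::('b + 'c) set ring) \<Phi>. balanced G \<Phi> \<and> \<Phi> x \<one>\<^bsub>C\<^esub> \<noteq> \<zero>\<^bsub>G\<^esub>"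
  shows "inj_on tensor_inl (carrier B)"
proof -
  interpret T: cring tensor by (rule tensor_cring)
  interpret ring_hom_ring B tensor tensor_inl
    by (rule ring_hom_ringI2[OF RB.ring_axioms T.ring_axioms tensor_inl_hom])
  have "x = \<zero>\<^bsub>B\<^esub>" if x: "x \<in> carrier B" and zero: "tensor_inl x = \<zero>\<^bsub>tensor\<^esub>" for x
  proof (rule ccontr)
    assume "x \<noteq> \<zero>\<^bsub>B\<^esub>"
    then obtain G :: "('b + 'c) set ring" and \<Phi> where "balanced G \<Phi>" "\<Phi> x \<one>\<^bsub>C\<^esub> \<noteq> \<zero>\<^bsub>G\<^esub>"
      using separating[OF x] by blast
    then show False
      using tensor_pure_eq_zeroD[OF zero[unfolded tensor_inl_def] x RC.one_closed] by blast
  qed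
  then have "a_kernel B tensor tensor_inl = {\<zero>\<^bsub>B\<^esub>}"
    unfolding a_kernel_def' using hom_zero RB.zero_closed by blast
  then show ?thesis by (rule trivial_ker_imp_inj)
qed

lemma inj_on_tensor_inr:
  assumes separating: "\<And>y. y \<in> carrier C \<Longrightarrow> y \<noteq> \<zero>\<^bsub>C\<^esub> \<Longrightarrow>
    \<exists>(G::('b + 'c) set ring) \<Phi>. balanced G \<Phi> \<and> \<Phi> \<one>\<^bsub>B\<^esub> y \<noteq> \<zero>\<^bsub>G\<^esub>"
  shows "inj_on tensor_inr (carrier C)"
proof -
  interpret T: cring tensor by (rule tensor_cring)
  interpret ring_hom_ring C tensor tensor_inr
    by (rule ring_hom_ringI2[OF RC.ring_axioms T.ring_axioms tensor_inr_hom])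
  have "y = \<zero>\<^bsub>C\<^esub>" if y: "y \<in> carrier C" and zero: "tensor_inr y = \<zero>\<^bsub>tensor\<^esub>" for y
  proof (rule ccontr)
    assume "y \<noteq> \<zero>\<^bsub>C\<^esub>"
    then obtain G :: "('b + 'c) set ring" and \<Phi> where "balanced G \<Phi>" "\<Phi> \<one>\<^bsub>B\<^esub> y \<noteq> \<zero>\<^bsub>G\<^esub>"
      using separating[OF y] by blast
    then show False
      using tensor_pure_eq_zeroD[OF zero[unfolded tensor_inr_def] RB.one_closed y] by blast
  qed
  then have "a_kernel C tensor tensor_inr = {\<zero>\<^bsub>C\<^esub>}"
    unfolding a_kernel_def' using hom_zero RC.zero_closed by blast
  then show ?thesis by (rule trivial_ker_imp_inj)
qed

end

section \<open>The amalgam\<close>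

context algebra_pair
begin

lemma tensor_inl_embedding:
  assumes "vn_regular_cring A" and "inj_on h2 (carrier A)"
  shows "ring_embedding B tensor tensor_inl"
proof -
  have "inj_on tensor_inl (carrier B)"
  proof (rule inj_on_tensor_inl)
    fix x assume "x \<in> carrier B" "x \<noteq> \<zero>\<^bsub>B\<^esub>"
    with assms interpret S: regular_separation A B C h1 h2 x
      by (intro regular_separation.intro algebra_pair_axioms regular_separation_axioms.intro)
        (auto simp: vn_regular_cring_def)
    have "inj ((`) Inl :: 'b set \<Rightarrow> ('b + 'c) set)"
      by (metis injI inj_Inl inj_image_eq_iff)
    then show "\<exists>(G::('b + 'c) set ring) \<Phi>. balanced G \<Phi> \<and> \<Phi> x \<one>\<^bsub>C\<^esub> \<noteq> \<zero>\<^bsub>G\<^esub>"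
      by (rule S.exists_separating_balanced_map)
  qed
  then show ?thesis using tensor_inl_hom by (simp add: ring_embedding_def)
qed

lemma tensor_inr_embedding:
  assumes "vn_regular_cring A" and "inj_on h1 (carrier A)"
  shows "ring_embedding C tensor tensor_inr"
proof -
  have "inj_on tensor_inr (carrier C)"
  proof (rule inj_on_tensor_inr)
    fix y assume "y \<in> carrier C" "y \<noteq> \<zero>\<^bsub>C\<^esub>"
    with assms interpret S: regular_separation A C B h2 h1 y
      by (intro regular_separation.intro algebra_pair.intro regular_separation_axioms.intro cA cB cC h1 h2)
        (auto simp: vn_regular_cring_def)
    have "inj ((`) Inr :: 'c set \<Rightarrow> ('b + 'c) set)"
      by (metis injI inj_Inr inj_image_eq_iff)
    then obtain G :: "('b + 'c) set ring" and \<Phi>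
      where "balanced_map A C B h2 h1 G \<Phi>" "\<Phi> y \<one>\<^bsub>B\<^esub> \<noteq> \<zero>\<^bsub>G\<^esub>"
      using S.exists_separating_balanced_map by blast
    then show "\<exists>(G::('b + 'c) set ring) \<Phi>. balanced G \<Phi> \<and> \<Phi> \<one>\<^bsub>B\<^esub> y \<noteq> \<zero>\<^bsub>G\<^esub>"
      using balanced_map_swap by fastforce
  qed
  then show ?thesis using tensor_inr_hom by (simp add: ring_embedding_def)
qed

end

text \<open>The amalgam has to live in \<open>('b + 'c) list set\<close>. Elements of the reduced quotient of
  \<open>tensor\<close> are sets of classes of pair lists; flattening such a set and spelling out each pair list
  as a list over \<open>'b + 'c\<close> is injective.\<close>

definition encode_pairs :: "('b \<times> 'c) list \<Rightarrow> ('b + 'c) list" where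
  "encode_pairs L = concat (map (\<lambda>p. [Inl (fst p), Inr (snd p)]) L)"

definition encode :: "('b \<times> 'c) list set set \<Rightarrow> ('b + 'c) list set" where
  "encode P = encode_pairs ` \<Union>P"

lemma inj_encode_pairs: "inj encode_pairs"
proof (rule injI)
  fix L M
  assume "encode_pairs L = encode_pairs M"
  then show "L = M"
  proof (induction L arbitrary: M)
    case Nil
    then show ?case by (cases M) (auto simp: encode_pairs_def)
  next
    case (Cons p L)
    then show ?case by (cases M) (auto simp: encode_pairs_def prod_eq_iff)
  qed
qed

context algebra_pair
begin

lemma tensor_rep_mem: "X \<in> carrier tensor \<Longrightarrow> tensor_rep X \<in> X"
  by (metis mem_Collect_eq tensor_class_def tensor_eq_def tensor_rep)

lemma tensor_carrier_disjoint:
  assumes X: "X \<in> carrier tensor" and Y: "Y \<in> carrier tensor" and L: "L \<in> X" "L \<in> Y"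
  shows "X = Y"
proof -
  have "tensor_eq (tensor_rep X) L" "tensor_eq (tensor_rep Y) L"
    using L tensor_rep[OF X] tensor_rep[OF Y] by (metis mem_Collect_eq tensor_class_def)+
  then have "tensor_eq (tensor_rep X) (tensor_rep Y)" using tensor_eq_sym tensor_eq_trans by blast
  then show "X = Y"
    using tensor_class_eq_iff[OF tensor_rep_wf[OF Y]] tensor_rep[OF X] tensor_rep[OF Y] by metis
qed

lemma inj_on_encode: "inj_on encode (carrier (tensor Quot nilradical tensor))"
proof (rule inj_onI)
  interpret T: cring tensor by (rule tensor_cring)
  interpret I: ideal "nilradical tensor" tensor by (rule T.nilradical_ideal)
  fix P P' assume P: "P \<in> carrier (tensor Quot nilradical tensor)"
    and P': "P' \<in> carrier (tensor Quot nilradical tensor)" and e: "encode P = encode P'"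
  obtain X where X: "X \<in> carrier tensor" "P = nilradical tensor +>\<^bsub>tensor\<^esub> X"
    using P by (auto simp: I.FactRing_carrier)
  obtain X' where X': "X' \<in> carrier tensor" "P' = nilradical tensor +>\<^bsub>tensor\<^esub> X'"
    using P' by (auto simp: I.FactRing_carrier)
  have "encode_pairs (tensor_rep X) \<in> encode P'"
    using e X I.a_rcos_self[OF X(1)] tensor_rep_mem[OF X(1)] unfolding encode_def by blast
  then obtain Y where Y: "Y \<in> P'" "tensor_rep X \<in> Y"
    using inj_encode_pairs unfolding encode_def by (auto dest: injD)
  have "Y \<in> carrier tensor" using I.a_elemrcos_carrier[OF X'(1)] Y(1) X'(2) by blast
  then have "Y = X" using tensor_carrier_disjoint X(1) Y(2) tensor_rep_mem[OF X(1)] by blast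
  then have "X \<in> nilradical tensor +>\<^bsub>tensor\<^esub> X'" using Y(1) X'(2) by simp
  then show "P = P'" using I.a_repr_independence'[OF _ X'(1)] X(2) X'(2) by simp
qed

end

theorem mainTheorem11:
  fixes A :: "'a ring" and B :: "'b ring" and C :: "'c ring"
    and h1 :: "'a \<Rightarrow> 'b" and h2 :: "'a \<Rightarrow> 'c"
  assumes "vn_regular_cring A"
    and "reduced_cring B" and "reduced_cring C"
    and "ring_embedding A B h1" and "ring_embedding A C h2"
  shows "\<exists>(D :: (('b + 'c) list set) ring) (g1 :: 'b \<Rightarrow> ('b + 'c) list set)
            (g2 :: 'c \<Rightarrow> ('b + 'c) list set).
           reduced_cring D \<and> ring_embedding B D g1 \<and> ring_embedding C D g2 \<and>
           (\<forall>a \<in> carrier A. g1 (h1 a) = g2 (h2 a))"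
proof -
  interpret algebra_pair A B C h1 h2
    using assms by (auto simp: algebra_pair_def vn_regular_cring_def reduced_cring_def ring_embedding_def)
  interpret T: cring tensor by (rule tensor_cring)
  let ?q = "(+>\<^bsub>tensor\<^esub>) (nilradical tensor)"
  let ?D = "image_ring encode (tensor Quot nilradical tensor)"
  have inj: "inj_on h1 (carrier A)" "inj_on h2 (carrier A)"
    using assms(4,5) by (simp_all add: ring_embedding_def)
  have encode: "ring_embedding (tensor Quot nilradical tensor) ?D encode"
    by (rule ring_embedding_image_ring[OF inj_on_encode])
  have "reduced_cring ?D"
    by (rule reduced_cring_image_ring[OF T.reduced_quotient_nilradical inj_on_encode])
  moreover have "ring_embedding B ?D (encode \<circ> (?q \<circ> tensor_inl))"
    using ring_embedding_quotient_nilradical[OF assms(2) tensor_cring tensor_inl_embedding[OF assms(1) inj(2)]]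
    by (rule ring_embedding_comp[OF _ encode])
  moreover have "ring_embedding C ?D (encode \<circ> (?q \<circ> tensor_inr))"
    using ring_embedding_quotient_nilradical[OF assms(3) tensor_cring tensor_inr_embedding[OF assms(1) inj(1)]]
    by (rule ring_embedding_comp[OF _ encode])
  moreover have "\<forall>a \<in> carrier A. (encode \<circ> (?q \<circ> tensor_inl)) (h1 a) = (encode \<circ> (?q \<circ> tensor_inr)) (h2 a)"
    by (simp add: tensor_inl_inr)
  ultimately show ?thesis by blast
qed

end
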